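(* As $n\to\infty$: $\mathrm{sat}_\circlearrowright(n,F)=\Theta(n)$ for $F\in\{M_2,S_1,S_2\}$; $\mathrm{sat}_\circlearrowright(n,F)=\Theta(n^2)$ for $F\in\{M_1,M_3,D_1,D_2\}$; and $\mathrm{sat}_\circlearrowright(n,S_3)=\Omega(n)$ and $\mathrm{sat}_\circlearrowright(n,S_3)=O(n\log_2 n)$.
   Context: A convex geometric hypergraph (cgh) on $\Omega_n=\{v_0,\dots,v_{n-1}\}$ is a family of subsets (edges) of $\Omega_n$, where the vertices carry the cyclic order $v_0<v_1<\dots<v_{n-1}<v_0$ (indices mod $n$). It is a $3$-cgh if all edges have size $3$. For a cgh $F$, $H$ contains a copy of $F$ if there is an injection of the vertex set of $F$ into $\Omega_n$ preserving the cyclic order and mapping every edge of $F$ to an edge of $H$; $H$ is $F$-free if it contains no copy of $F$. $H\subseteq\binom{\Omega_n}{3}$ is $F$-saturated if it is $F$-free and for every $e\in\binom{\Omega_n}{3}\setminus H$, $H\cup\{e\}$ contains a copy of $F$. $\mathrm{sat}_\circlearrowright(n,F)$ is the minimum number of edges of an $F$-saturated $3$-cgh on $\Omega_n$. The following two-edge $3$-cghs are considered (each on the vertex set $\Omega_k$ with $k$ the number of vertices used): $M_1$: $\{v_0,v_1,v_2\},\{v_3,v_4,v_5\}$; $M_2$: $\{v_0,v_1,v_3\},\{v_2,v_4,v_5\}$; $M_3$: $\{v_0,v_2,v_4\},\{v_1,v_3,v_5\}$; $S_1$: $\{v_0,v_1,v_2\},\{v_0,v_3,v_4\}$; $S_2$: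 $\{v_0,v_1,v_4\},\{v_0,v_2,v_3\}$; $S_3$: $\{v_0,v_1,v_3\},\{v_0,v_2,v_4\}$; $D_1$: $\{v_0,v_1,v_2\},\{v_0,v_2,v_3\}$; $D_2$: $\{v_0,v_1,v_2\},\{v_0,v_1,v_3\}$. *)

theory Defs
  imports Main "HOL-Library.Landau_Symbols"
begin

text \<open>Vertices of \<Omega>_n are represented by 0..<n (v_i is i), with cyclic order
0 < 1 < ... < n-1 < 0.  A cgh is a set of vertex sets.\<close>

definition cyc :: "nat \<Rightarrow> nat \<Rightarrow> nat \<Rightarrow> bool" where
  "cyc a b c \<longleftrightarrow> (a < b \<and> b < c) \<or> (b < c \<and> c < a) \<or> (c < a \<and> a < b)"

definition cyc_embedding :: "nat \<Rightarrow> nat \<Rightarrow> (nat \<Rightarrow> nat) \<Rightarrow> bool" where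
  "cyc_embedding k n phi \<longleftrightarrow>
     inj_on phi {..<k} \<and> phi ` {..<k} \<subseteq> {..<n} \<and>
     (\<forall>a<k. \<forall>b<k. \<forall>c<k. cyc a b c \<longrightarrow> cyc (phi a) (phi b) (phi c))"

definition contains_copy :: "nat \<Rightarrow> nat set set \<Rightarrow> nat \<Rightarrow> nat set set \<Rightarrow> bool" where
  "contains_copy n H k F \<longleftrightarrow>
     (\<exists>phi. cyc_embedding k n phi \<and> (\<forall>e\<in>F. phi ` e \<in> H))"

definition triples :: "nat \<Rightarrow> nat set set" where
  "triples n = {e. e \<subseteq> {..<n} \<and> card e = 3}"

definition saturated :: "nat \<Rightarrow> nat \<Rightarrow> nat set set \<Rightarrow> nat set set \<Rightarrow> bool" where
  "saturated n k F H \<longleftrightarrow>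
     H \<subseteq> triples n \<and> \<not> contains_copy n H k F \<and>
     (\<forall>e\<in>triples n - H. contains_copy n (insert e H) k F)"

definition sat_cyc :: "nat \<Rightarrow> nat \<Rightarrow> nat set set \<Rightarrow> nat" where
  "sat_cyc n k F = (LEAST m. \<exists>H. saturated n k F H \<and> card H = m)"

definition M1 :: "nat set set" where "M1 = {{0,1,2},{3,4,5}}"
definition M2 :: "nat set set" where "M2 = {{0,1,3},{2,4,5}}"
definition M3 :: "nat set set" where "M3 = {{0,2,4},{1,3,5}}"
definition S1 :: "nat set set" where "S1 = {{0,1,2},{0,3,4}}"
definition S2 :: "nat set set" where "S2 = {{0,1,4},{0,2,3}}"
definition S3 :: "nat set set" where "S3 = {{0,1,3},{0,2,4}}"
definition D1 :: "nat set set" where "D1 = {{0,1,2},{0,2,3}}"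
definition D2 :: "nat set set" where "D2 = {{0,1,2},{0,1,3}}"

end

theory Submission
  imports Defs "HOL-Library.Log_Nat"
begin

text \<open>Upper bounds come from explicit \<open>F\<close>-free hypergraphs \<open>G\<close> together with a small family
  \<open>S\<close> of exceptional triples such that every triple outside \<open>G \<union> S\<close> already completes a copy of
  \<open>F\<close> over \<open>G\<close>; adding triples of \<open>S\<close> greedily then gives a saturated hypergraph with at most
  \<open>|G| + |S|\<close> edges. For \<open>S\<^sub>3\<close> the construction is recursive: a fan from the endpoints of a
  halving chord, plus the construction on both sides of it, which yields \<open>O(n log n)\<close> edges.

  Lower bounds: if the two edges of \<open>F\<close> share a vertex, a saturated \<open>H\<close> covers all but two vertices;
  for \<open>M\<^sub>2\<close> it meets every three consecutive vertices; for \<open>M\<^sub>3\<close> it contains every triple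
  \<open>{x, x + 1, y}\<close>; if the edges share two vertices (\<open>D\<^sub>1\<close>, \<open>D\<^sub>2\<close>), all pairs of vertices
  away from the link of a vertex of minimum degree are covered; and for \<open>M\<^sub>1\<close> all pairs are covered:
  after a rotation the pair contains \<open>v\<^sub>n\<^sub>-\<^sub>1\<close>, and a sweep produces two edges in disjoint arcs,
  i.e. a copy of \<open>M\<^sub>1\<close>.\<close>

section \<open>Cyclic order and copies\<close>

lemma cyc_rotate: "cyc a b c \<longleftrightarrow> cyc b c a"
  unfolding cyc_def by auto

lemma cyc_adjacent: "\<not> cyc a w (Suc a)"
  unfolding cyc_def by auto

lemma cyc_interleave: "cyc a c b \<Longrightarrow> cyc b d a \<Longrightarrow> cyc c b d"
  unfolding cyc_def by (elim disjE conjE) simp_all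

lemma cyc_triple_rotation:
  assumes "x < y" "y < z" "{p, q, r} = {x, y, z}" "cyc p q r"
  shows "(p = x \<and> q = y \<and> r = z) \<or> (p = y \<and> q = z \<and> r = x) \<or> (p = z \<and> q = x \<and> r = y)"
proof -
  have "p \<noteq> q" "p \<noteq> r" "q \<noteq> r" using assms(4) unfolding cyc_def by auto
  moreover have "p \<in> {x, y, z}" "q \<in> {x, y, z}" "r \<in> {x, y, z}" using assms(3) by blast+
  ultimately have "(p = x \<and> q = y \<and> r = z) \<or> (p = y \<and> q = z \<and> r = x) \<or> (p = z \<and> q = x \<and> r = y) \<or>
     (p = x \<and> q = z \<and> r = y) \<or> (p = y \<and> q = x \<and> r = z) \<or> (p = z \<and> q = y \<and> r = x)"
    by auto
  then show ?thesis using assms(1,2,4) unfolding cyc_def by auto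
qed

lemma mod_less_double:
  fixes x n :: nat
  assumes "x < 2 * n"
  shows "x mod n = (if x < n then x else x - n)"
  using assms le_mod_geq[of n x] by auto

lemma cyc_mod_window:
  fixes a b c n :: nat
  assumes "a < b" "b < c" "c < a + n"
  shows "cyc (a mod n) (b mod n) (c mod n)"
proof -
  define u where "u = a mod n"
  have u: "u < n" using assms by (simp add: u_def)
  define B where "B = u + (b - a)"
  define C where "C = u + (c - a)"
  have order: "u < B" "B < C" "C < u + n" using assms unfolding B_def C_def by linarith+
  have "b = B + a div n * n" "c = C + a div n * n"
    using assms div_mult_mod_eq[of a n] unfolding u_def B_def C_def by linarith+
  then have "b mod n = B mod n" "c mod n = C mod n" by (metis mod_mult_self1)+
  moreover have "B < 2 * n" "C < 2 * n" using order u by linarith+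
  ultimately have b: "b mod n = (if B < n then B else B - n)"
    and c: "c mod n = (if C < n then C else C - n)"
    using mod_less_double by presburger+
  consider "C < n" | "B < n" "n \<le> C" | "n \<le> B" using order by linarith
  then show ?thesis
  proof cases
    case 1 then show ?thesis using order b c unfolding cyc_def u_def by simp
  next
    case 2
    then have "c mod n < a mod n" "a mod n < b mod n" using order b c unfolding u_def by auto
    then show ?thesis unfolding cyc_def by simp
  next
    case 3
    then have "b mod n < c mod n" "c mod n < a mod n" using order b c unfolding u_def by auto
    then show ?thesis unfolding cyc_def by simp
  qed
qed

lemma mod_neq_in_window:
  fixes a b n :: nat
  assumes "a < b" "b < a + n"
  shows "a mod n \<noteq> b mod n"
proof
  assume "a mod n = b mod n"
  then have "n dvd b - a" using assms mod_eq_dvd_iff_nat[of a b n] by simp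
  then show False using assms nat_dvd_not_less[of "b - a" n] by simp
qed

lemma cyc_embedding_sorted_list:
  assumes sorted: "sorted_wrt (<) xs" and ne: "xs \<noteq> []" and span: "last xs < hd xs + n"
  shows "cyc_embedding (length xs) n (\<lambda>i. xs ! i mod n)"
proof -
  have lt: "xs ! i < xs ! j" if "i < j" "j < length xs" for i j
    using sorted_wrt_nth_less[OF sorted that] .
  have le_last: "xs ! j \<le> last xs" if "j < length xs" for j
  proof -
    have "j < length xs - 1 \<or> j = length xs - 1" using that by linarith
    then show ?thesis using lt[of j "length xs - 1"] that ne by (auto simp: last_conv_nth)
  qed
  have hd_le: "hd xs \<le> xs ! i" if "i < length xs" for i
    using lt[of 0 i] that ne by (cases "i = 0") (auto simp: hd_conv_nth)
  have window: "xs ! j < xs ! i + n" if "i < length xs" "j < length xs" for i j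
    using le_last[OF that(2)] hd_le[OF that(1)] span by linarith
  have "inj_on (\<lambda>i. xs ! i mod n) {..<length xs}"
  proof (rule inj_onI)
    fix i j assume "i \<in> {..<length xs}" "j \<in> {..<length xs}" "xs ! i mod n = xs ! j mod n"
    then show "i = j"
      using mod_neq_in_window[of "xs ! i" "xs ! j" n] mod_neq_in_window[of "xs ! j" "xs ! i" n]
        lt[of i j] lt[of j i] window[of i j] window[of j i]
      by (metis lessThan_iff linorder_neqE_nat)
  qed
  moreover have sorted_cyc: "cyc (xs ! a mod n) (xs ! b mod n) (xs ! c mod n)"
    if "a < b" "b < c" "c < length xs" for a b c
    using cyc_mod_window[of "xs ! a" "xs ! b" "xs ! c" n] lt[of a b] lt[of b c] window[of a c] that
    by simp
  moreover have "0 < n" using window[of 0 0] ne by simp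
  moreover have "cyc (xs ! a mod n) (xs ! b mod n) (xs ! c mod n)"
    if "a < length xs" "b < length xs" "c < length xs" "cyc a b c" for a b c
    using that(4) sorted_cyc[of a b c] sorted_cyc[of b c a] sorted_cyc[of c a b] that(1-3) cyc_rotate
    unfolding cyc_def by metis
  ultimately show ?thesis unfolding cyc_embedding_def by auto
qed

text \<open>Copies are exhibited by listing the images of \<open>v\<^sub>0, \<dots>, v\<^sub>k\<^sub>-\<^sub>1\<close> as an
  increasing list of naturals spanning less than \<open>n\<close>; entries \<open>\<ge> n\<close> stand for their
  residues, i.e. the list may wrap around past \<open>v\<^sub>n\<^sub>-\<^sub>1\<close>.\<close>

lemma contains_copy_sorted_listI:
  assumes "sorted_wrt (<) xs" "xs \<noteq> []" "last xs < hd xs + n" "length xs = k"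
    and "\<forall>e\<in>F. (\<lambda>i. xs ! i mod n) ` e \<in> H"
  shows "contains_copy n H k F"
  unfolding contains_copy_def using cyc_embedding_sorted_list[OF assms(1-3)] assms(4,5) by blast

lemma Suc_self_mod [simp]: "2 \<le> n \<Longrightarrow> Suc n mod n = 1"
  by (simp add: mod_Suc)

lemma Suc_Suc_self_mod [simp]: "3 \<le> n \<Longrightarrow> Suc (Suc n) mod n = 2"
  by (simp add: mod_Suc)

lemma Suc_Suc_Suc_self_mod [simp]: "4 \<le> n \<Longrightarrow> Suc (Suc (Suc n)) mod n = 3"
  by (simp add: mod_Suc)

lemma Suc_add_self_mod [simp]: "Suc c < n \<Longrightarrow> Suc (n + c) mod n = Suc c"
  by (metis add_Suc_right mod_add_self1 mod_less)

lemma cyc_embedding_cyc: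
  "cyc_embedding k n phi \<Longrightarrow> a < k \<Longrightarrow> b < k \<Longrightarrow> c < k \<Longrightarrow> cyc a b c \<Longrightarrow>
    cyc (phi a) (phi b) (phi c)"
  unfolding cyc_embedding_def by blast

lemma cyc_embedding_less: "cyc_embedding k n phi \<Longrightarrow> a < k \<Longrightarrow> phi a < n"
  unfolding cyc_embedding_def by auto

lemma cyc_embedding_neq:
  "cyc_embedding k n phi \<Longrightarrow> a < k \<Longrightarrow> b < k \<Longrightarrow> a \<noteq> b \<Longrightarrow> phi a \<noteq> phi b"
  unfolding cyc_embedding_def inj_on_def by blast

lemma contains_copy_mono: "contains_copy n A k F \<Longrightarrow> A \<subseteq> B \<Longrightarrow> contains_copy n B k F"
  unfolding contains_copy_def by blast

lemma contains_copy_insert_two_edges: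
  assumes F: "F = {ea, eb}" "ea \<noteq> eb" "ea \<subseteq> {..<k}" "eb \<subseteq> {..<k}"
    and copy: "contains_copy n (insert t H) k F" and free: "\<not> contains_copy n H k F"
  obtains phi where "cyc_embedding k n phi"
    "(phi ` ea = t \<and> phi ` eb \<in> H) \<or> (phi ` eb = t \<and> phi ` ea \<in> H)"
proof -
  obtain phi where emb: "cyc_embedding k n phi" and im: "\<forall>e\<in>F. phi ` e \<in> insert t H"
    using copy unfolding contains_copy_def by blast
  have "inj_on phi {..<k}" using emb unfolding cyc_embedding_def by blast
  then have "phi ` ea \<noteq> phi ` eb" using inj_on_image_eq_iff F(2-4) by metis
  moreover have "\<not> (phi ` ea \<in> H \<and> phi ` eb \<in> H)"
    using free emb F(1) unfolding contains_copy_def by blast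
  ultimately show ?thesis using that emb im F(1) by auto
qed

lemma contains_copy_pairwise_intersecting:
  assumes "\<forall>a\<in>G. \<forall>b\<in>G. a \<inter> b \<noteq> {}"
    and "F = {ea, eb}" "ea \<inter> eb = {}" "ea \<subseteq> {..<k}" "eb \<subseteq> {..<k}"
  shows "\<not> contains_copy n G k F"
proof
  assume "contains_copy n G k F"
  then obtain phi where emb: "cyc_embedding k n phi" and im: "phi ` ea \<in> G" "phi ` eb \<in> G"
    unfolding contains_copy_def using assms(2) by auto
  have "inj_on phi {..<k}" using emb unfolding cyc_embedding_def by blast
  then have "phi ` ea \<inter> phi ` eb = phi ` (ea \<inter> eb)"
    using assms(4,5) by (simp add: inj_on_image_Int)
  then show False using assms(1,3) im by auto
qed

lemma contains_copy_pairwise_two_common: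
  assumes G: "\<forall>a\<in>G. \<forall>b\<in>G. a \<noteq> b \<longrightarrow> 2 \<le> card (a \<inter> b)"
    and F: "F = {ea, eb}" "ea \<inter> eb = {v}" "ea \<noteq> eb" "ea \<subseteq> {..<k}" "eb \<subseteq> {..<k}"
  shows "\<not> contains_copy n G k F"
proof
  assume "contains_copy n G k F"
  then obtain phi where emb: "cyc_embedding k n phi" and im: "phi ` ea \<in> G" "phi ` eb \<in> G"
    unfolding contains_copy_def using F(1) by auto
  have inj: "inj_on phi {..<k}" using emb unfolding cyc_embedding_def by blast
  have "phi ` ea \<noteq> phi ` eb" using inj_on_image_eq_iff[OF inj F(4,5)] F(3) by blast
  then have "2 \<le> card (phi ` ea \<inter> phi ` eb)" using G[rule_format, OF im] by simp
  moreover have "phi ` ea \<inter> phi ` eb = {phi v}"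
    using F(2) inj_on_image_Int[OF inj F(4,5)] by simp
  ultimately show False by simp
qed

lemma M1_edges: "M1 = {{0, 1, 2}, {3, 4, 5}}" "{0::nat, 1, 2} \<noteq> {3, 4, 5}"
    "{0::nat, 1, 2} \<subseteq> {..<6}" "{3::nat, 4, 5} \<subseteq> {..<6}"
proof -
  have "{0::nat, 1, 2} \<noteq> {3, 4, 5}" by (metis insertI1 insert_iff singletonD zero_neq_numeral)
  then show "M1 = {{0, 1, 2}, {3, 4, 5}}" "{0::nat, 1, 2} \<noteq> {3, 4, 5}"
    "{0::nat, 1, 2} \<subseteq> {..<6}" "{3::nat, 4, 5} \<subseteq> {..<6}"
    by (simp_all add: M1_def)
qed

lemma M2_edges: "M2 = {{0, 1, 3}, {2, 4, 5}}" "{0::nat, 1, 3} \<noteq> {2, 4, 5}"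
    "{0::nat, 1, 3} \<subseteq> {..<6}" "{2::nat, 4, 5} \<subseteq> {..<6}"
  by (auto simp: M2_def insert_eq_iff)

lemma M3_edges: "M3 = {{0, 2, 4}, {1, 3, 5}}" "{0::nat, 2, 4} \<noteq> {1, 3, 5}"
    "{0::nat, 2, 4} \<subseteq> {..<6}" "{1::nat, 3, 5} \<subseteq> {..<6}"
proof -
  have "{0::nat, 2, 4} \<noteq> {1, 3, 5}" by (metis insertI1 insert_iff singletonD zero_neq_one zero_neq_numeral)
  then show "M3 = {{0, 2, 4}, {1, 3, 5}}" "{0::nat, 2, 4} \<noteq> {1, 3, 5}"
    "{0::nat, 2, 4} \<subseteq> {..<6}" "{1::nat, 3, 5} \<subseteq> {..<6}"
    by (simp_all add: M3_def)
qed

lemma S1_edges: "S1 = {{0, 1, 2}, {0, 3, 4}}" "{0::nat, 1, 2} \<noteq> {0, 3, 4}"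
  "{0::nat, 1, 2} \<subseteq> {..<5}" "{0::nat, 3, 4} \<subseteq> {..<5}"
  by (simp_all add: S1_def insert_eq_iff)

lemma S2_edges: "S2 = {{0, 1, 4}, {0, 2, 3}}" "{0::nat, 1, 4} \<noteq> {0, 2, 3}"
  "{0::nat, 1, 4} \<subseteq> {..<5}" "{0::nat, 2, 3} \<subseteq> {..<5}"
  by (simp_all add: S2_def insert_eq_iff)

lemma S3_edges: "S3 = {{0, 1, 3}, {0, 2, 4}}" "{0::nat, 1, 3} \<noteq> {0, 2, 4}"
  "{0::nat, 1, 3} \<subseteq> {..<5}" "{0::nat, 2, 4} \<subseteq> {..<5}"
  by (simp_all add: S3_def insert_eq_iff)

lemma D1_edges: "D1 = {{0, 1, 2}, {0, 2, 3}}" "{0::nat, 1, 2} \<noteq> {0, 2, 3}"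
  "{0::nat, 1, 2} \<subseteq> {..<4}" "{0::nat, 2, 3} \<subseteq> {..<4}"
proof -
  have "{0::nat, 1, 2} \<noteq> {0, 2, 3}"
    by (metis insertI1 insert_iff singletonD one_neq_zero num.distinct numeral_eq_one_iff)
  then show "D1 = {{0, 1, 2}, {0, 2, 3}}" "{0::nat, 1, 2} \<noteq> {0, 2, 3}"
    "{0::nat, 1, 2} \<subseteq> {..<4}" "{0::nat, 2, 3} \<subseteq> {..<4}"
    by (simp_all add: D1_def)
qed

lemma D2_edges: "D2 = {{0, 1, 2}, {0, 1, 3}}" "{0::nat, 1, 2} \<noteq> {0, 1, 3}"
  "{0::nat, 1, 2} \<subseteq> {..<4}" "{0::nat, 1, 3} \<subseteq> {..<4}"
  by (simp_all add: D2_def insert_eq_iff)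

section \<open>Triples and saturation\<close>

lemma finite_triples: "finite (triples n)"
  unfolding triples_def by (rule finite_subset[of _ "Pow {..<n}"]) auto

lemma finite_subset_triples: "H \<subseteq> triples n \<Longrightarrow> finite H"
  using finite_triples finite_subset by blast

lemma sorted_triple_in_triples: "x < y \<Longrightarrow> y < z \<Longrightarrow> z < n \<Longrightarrow> {x, y, z} \<in> triples n"
  unfolding triples_def by auto

lemma triplesE:
  assumes "e \<in> triples n"
  obtains x y z where "x < y" "y < z" "z < n" "e = {x, y, z}"
proof -
  have fin: "finite e" and c: "card e = 3" and sub: "e \<subseteq> {..<n}"
    using assms finite_subset[of e "{..<n}"] by (auto simp: triples_def)
  define xs where "xs = sorted_list_of_set e"
  have len: "length xs = 3" and srt: "sorted_wrt (<) xs" and set: "set xs = e"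
    using fin c by (simp_all add: xs_def)
  then obtain x y z where "xs = [x, y, z]"
    by (auto simp: numeral_3_eq_3 length_Suc_conv)
  then show ?thesis using that srt set sub by auto
qed

lemma triple_not_empty: "e \<in> triples n \<Longrightarrow> e \<subseteq> {} \<Longrightarrow> False"
  unfolding triples_def by auto

lemma Union_triples_subset: "H \<subseteq> triples n \<Longrightarrow> \<Union>H \<subseteq> {..<n}"
  unfolding triples_def by auto

lemma card_Union_triples_le:
  assumes "H \<subseteq> triples n"
  shows "card (\<Union>H) \<le> 3 * card H"
proof -
  have "card (\<Union>H) \<le> sum card H" by (rule card_Union_le_sum_card)
  also have "\<dots> = 3 * card H"
    using assms by (simp add: sum.cong[of H H card "\<lambda>_. 3"] subset_iff triples_def)
  finally show ?thesis .
qed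

lemma saturatedD:
  assumes "saturated n k F H"
  shows "H \<subseteq> triples n" "\<not> contains_copy n H k F"
    "\<And>e. e \<in> triples n \<Longrightarrow> e \<notin> H \<Longrightarrow> contains_copy n (insert e H) k F"
  using assms unfolding saturated_def by auto

lemma saturated_extension_exists:
  assumes G: "G \<subseteq> triples n" and free: "\<not> contains_copy n G k F"
    and complete: "\<forall>e\<in>triples n - (G \<union> S). contains_copy n (insert e G) k F"
  obtains H where "saturated n k F H" "G \<subseteq> H" "H \<subseteq> G \<union> (S \<inter> triples n)"
proof -
  define C where "C = {X. G \<subseteq> X \<and> X \<subseteq> G \<union> (S \<inter> triples n) \<and> \<not> contains_copy n X k F}"
  have fin: "finite (G \<union> (S \<inter> triples n))"
    using G finite_triples by (meson finite_Int finite_UnI finite_subset)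
  have "finite C" unfolding C_def by (rule finite_subset[of _ "Pow (G \<union> (S \<inter> triples n))"]) (use fin in auto)
  moreover have "G \<in> C" unfolding C_def using free by auto
  ultimately obtain X where XC: "X \<in> C" and max: "\<And>Y. Y \<in> C \<Longrightarrow> card Y \<le> card X"
    using Max_in[of "card ` C"] Max_ge[of "card ` C"] by (metis (no_types, lifting) empty_iff finite_imageI image_iff)
  have X: "G \<subseteq> X" "X \<subseteq> G \<union> (S \<inter> triples n)" "\<not> contains_copy n X k F"
    using XC unfolding C_def by auto
  have finX: "finite X" using X(2) fin finite_subset by blast
  have "contains_copy n (insert e X) k F" if e: "e \<in> triples n - X" for e
  proof (cases "e \<in> S")
    case True
    show ?thesis
    proof (rule ccontr)
      assume "\<not> contains_copy n (insert e X) k F"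
      then have "insert e X \<in> C" unfolding C_def using X e True by auto
      then show False using max[of "insert e X"] e finX by simp
    qed
  next
    case False
    then have "contains_copy n (insert e G) k F" using complete e X by blast
    then show ?thesis by (rule contains_copy_mono) (use X in auto)
  qed
  then have "saturated n k F X" unfolding saturated_def using X G by auto
  then show ?thesis using that X by blast
qed

lemma sat_cyc_le: "saturated n k F H \<Longrightarrow> sat_cyc n k F \<le> card H"
  unfolding sat_cyc_def by (rule Least_le) blast

lemma sat_cyc_le_extension:
  assumes "G \<subseteq> triples n" "\<not> contains_copy n G k F"
    "\<forall>e\<in>triples n - (G \<union> S). contains_copy n (insert e G) k F"
  shows "sat_cyc n k F \<le> card G + card (S \<inter> triples n)"
proof -
  obtain H where H: "saturated n k F H" "H \<subseteq> G \<union> (S \<inter> triples n)"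
    using saturated_extension_exists[OF assms] by blast
  have "finite (G \<union> (S \<inter> triples n))" using assms(1) finite_subset_triples by auto
  then have "card H \<le> card G + card (S \<inter> triples n)"
    using card_mono[OF _ H(2)] card_Un_le le_trans by blast
  then show ?thesis using sat_cyc_le[OF H(1)] by linarith
qed

lemma sat_cyc_attained:
  assumes "F \<noteq> {}"
  obtains H where "saturated n k F H" "sat_cyc n k F = card H"
proof -
  have "\<not> contains_copy n {} k F" using assms unfolding contains_copy_def by auto
  then obtain H0 where "saturated n k F H0"
    using saturated_extension_exists[of "{}" n k F "triples n"] by auto
  then have "\<exists>m H. saturated n k F H \<and> card H = m" by blast
  from LeastI_ex[OF this] show ?thesis using that unfolding sat_cyc_def by metis
qed

section \<open>Upper bounds\<close>

lemma card_image_lessThan_le: "card (f ` {..<(n::nat)}) \<le> n"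
  using card_image_le[of "{..<n}" f] by simp

lemma card_image_lessThan_square_le: "card (f ` ({..<(n::nat)} \<times> {..<n})) \<le> n * n"
  using card_image_le[of "{..<n} \<times> {..<n}" f] by (simp add: card_cartesian_product)

lemma card_Int_triples_le: "finite S \<Longrightarrow> card (S \<inter> triples n) \<le> card S"
  by (rule card_mono) auto

definition star0 :: "nat \<Rightarrow> nat set set" where
  "star0 n = {e \<in> triples n. 0 \<in> e}"

lemma star0_subset_triples: "star0 n \<subseteq> triples n"
  unfolding star0_def by auto

lemma star0_pairwise_intersecting: "\<forall>a\<in>star0 n. \<forall>b\<in>star0 n. a \<inter> b \<noteq> {}"
  unfolding star0_def by auto

lemma star0_mem: "0 < b \<Longrightarrow> b < c \<Longrightarrow> c < n \<Longrightarrow> {0, b, c} \<in> star0 n"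
  unfolding star0_def using sorted_triple_in_triples by auto

lemma card_star0_le: "card (star0 n) \<le> n * n"
proof -
  have "star0 n \<subseteq> (\<lambda>(b, c). {0, b, c}) ` ({..<n} \<times> {..<n})"
  proof
    fix e assume "e \<in> star0 n"
    then obtain x y z where "x < y" "y < z" "z < n" "e = {x, y, z}" "0 \<in> e"
      unfolding star0_def using triplesE by blast
    then show "e \<in> (\<lambda>(b, c). {0, b, c}) ` ({..<n} \<times> {..<n})"
      by (auto intro!: image_eqI[where x="(y, z)"])
  qed
  then show ?thesis using card_image_lessThan_square_le[of "\<lambda>(b, c). {0, b, c}" n]
    by (meson card_mono finite_SigmaI finite_imageI finite_lessThan le_trans)
qed

lemma M1_complete_star0:
  assumes n: "6 \<le> n" and xyz: "0 < x" "x < y" "y < z" "z < n"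
    and not_exceptional: "\<not> (x = 1 \<and> z = n - 1)" "\<not> (x = 1 \<and> z = n - 2)" "\<not> (x = 2 \<and> z = n - 1)"
  shows "contains_copy n (insert {x, y, z} (star0 n)) 6 M1"
proof -
  consider "3 \<le> x" | "z + 3 \<le> n" | "x = 2" "z = n - 2" using xyz n not_exceptional by linarith
  then show ?thesis
  proof cases
    case 1
    have "{0, 1, 2} \<in> star0 n" using star0_mem n by simp
    then show ?thesis
      by (intro contains_copy_sorted_listI[where xs="[0, 1, 2, x, y, z]"])
        (use xyz 1 in \<open>auto simp: M1_def\<close>)
  next
    case 2
    have "{0, n - 2, n - 1} \<in> star0 n" using star0_mem n by simp
    then show ?thesis
      by (intro contains_copy_sorted_listI[where xs="[x, y, z, n - 2, n - 1, n]"])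
        (use xyz 2 in \<open>auto simp: M1_def insert_commute\<close>)
  next
    case 3
    have "{0, 1, n - 1} \<in> star0 n" using star0_mem n by simp
    then show ?thesis
      by (intro contains_copy_sorted_listI[where xs="[x, y, z, n - 1, n, n + 1]"])
        (use xyz 3 n in \<open>auto simp: M1_def insert_commute\<close>)
  qed
qed

lemma M1_upper:
  assumes n: "6 \<le> n"
  shows "sat_cyc n 6 M1 \<le> n * n + 3 * n"
proof -
  define S where "S = (\<lambda>y. {1, y, n - 1}) ` {..<n} \<union> (\<lambda>y. {1, y, n - 2}) ` {..<n}
    \<union> (\<lambda>y. {2, y, n - 1}) ` {..<n}"
  have free: "\<not> contains_copy n (star0 n) 6 M1"
    by (rule contains_copy_pairwise_intersecting[OF star0_pairwise_intersecting, where ea="{0,1,2}" and eb="{3,4,5}"])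
      (auto simp: M1_def)
  have complete: "\<forall>e\<in>triples n - (star0 n \<union> S). contains_copy n (insert e (star0 n)) 6 M1"
  proof
    fix e assume e: "e \<in> triples n - (star0 n \<union> S)"
    then obtain x y z where xyz: "x < y" "y < z" "z < n" "e = {x, y, z}"
      using triplesE by blast
    have "0 < x" using e xyz unfolding star0_def by (cases x) auto
    moreover have "\<not> (x = 1 \<and> z = n - 1)" "\<not> (x = 1 \<and> z = n - 2)" "\<not> (x = 2 \<and> z = n - 1)"
      using e xyz unfolding S_def by (auto simp: insert_commute)
    ultimately have "contains_copy n (insert {x, y, z} (star0 n)) 6 M1"
      using M1_complete_star0[OF n _ xyz(1-3)] by blast
    then show "contains_copy n (insert e (star0 n)) 6 M1" using xyz(4) by simp
  qed
  have "card (S \<inter> triples n) \<le> 3 * n"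
  proof -
    have "card (S \<inter> triples n) \<le> card S" by (rule card_Int_triples_le) (simp add: S_def)
    also have "\<dots> \<le> n + n + n" unfolding S_def
      by (meson card_Un_le card_image_lessThan_le add_mono le_trans)
    finally show ?thesis by simp
  qed
  then show ?thesis
    using sat_cyc_le_extension[OF star0_subset_triples free complete] card_star0_le[of n] by linarith
qed

lemma M3_upper:
  assumes n: "6 \<le> n"
  shows "sat_cyc n 6 M3 \<le> n * n + n * n"
proof -
  define S where "S = (\<lambda>(i, y). {i, i + 1, y}) ` ({..<n} \<times> {..<n})"
  have free: "\<not> contains_copy n (star0 n) 6 M3"
    by (rule contains_copy_pairwise_intersecting[OF star0_pairwise_intersecting, where ea="{0,2,4}" and eb="{1,3,5}"])
      (auto simp: M3_def)
  have complete: "\<forall>e\<in>triples n - (star0 n \<union> S). contains_copy n (insert e (star0 n)) 6 M3"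
  proof
    fix e assume e: "e \<in> triples n - (star0 n \<union> S)"
    obtain x y z where xyz: "x < y" "y < z" "z < n" "e = {x, y, z}"
      using e triplesE by blast
    have "0 < x" using e xyz unfolding star0_def by (cases x) auto
    have "y \<noteq> x + 1"
      using e xyz unfolding S_def by (auto intro!: image_eqI[where x="(x, z)"])
    moreover have "z \<noteq> y + 1"
      using e xyz unfolding S_def by (auto intro!: image_eqI[where x="(y, x)"] simp: insert_commute)
    moreover from calculation have "{0, x + 1, y + 1} \<in> star0 n" using star0_mem xyz by simp
    ultimately show "contains_copy n (insert e (star0 n)) 6 M3"
      by (intro contains_copy_sorted_listI[where xs="[0, x, x + 1, y, y + 1, z]"])
        (use xyz \<open>0 < x\<close> in \<open>auto simp: M3_def insert_commute\<close>)
  qed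
  have "card (S \<inter> triples n) \<le> n * n"
    using card_Int_triples_le[of S n] card_image_lessThan_square_le[of "\<lambda>(i, y). {i, i + 1, y}" n]
    unfolding S_def by auto
  then show ?thesis
    using sat_cyc_le_extension[OF star0_subset_triples free complete] card_star0_le[of n] by linarith
qed

lemma triple_containing_pair:
  assumes "e \<in> triples n" "a \<in> e" "b \<in> e" "a \<noteq> b"
  obtains w where "w < n" "e = {a, b, w}"
proof -
  have "finite e" "card e = 3" "e \<subseteq> {..<n}" using assms(1) finite_subset[of e "{..<n}"]
    by (auto simp: triples_def)
  then have "card (e - {a, b}) = 1" using assms(2-4) by (simp add: card_Diff_subset)
  then obtain w where "e - {a, b} = {w}" by (meson card_1_singletonE)
  then show ?thesis using that assms(2,3) \<open>e \<subseteq> {..<n}\<close> by blast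
qed

definition star012 :: "nat \<Rightarrow> nat set set" where
  "star012 n = {e \<in> triples n. {0, 1} \<subseteq> e \<or> {0, 2} \<subseteq> e \<or> {1, 2} \<subseteq> e}"

lemma star012_mem: "a < b \<Longrightarrow> b < c \<Longrightarrow> c < n \<Longrightarrow> a \<le> 1 \<Longrightarrow> b \<le> 2 \<Longrightarrow> {a, b, c} \<in> star012 n"
  unfolding star012_def using sorted_triple_in_triples by auto

lemma card_star012_le: "card (star012 n) \<le> 3 * n"
proof -
  let ?fan = "\<lambda>a b. (\<lambda>w. {a, b, w}) ` {..<n}"
  have "star012 n \<subseteq> ?fan 0 1 \<union> ?fan 0 2 \<union> ?fan 1 2"
  proof
    fix e assume "e \<in> star012 n"
    then have e: "e \<in> triples n" "{0, 1} \<subseteq> e \<or> {0, 2} \<subseteq> e \<or> {1, 2} \<subseteq> e"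
      unfolding star012_def by auto
    have "e \<in> ?fan a b" if "a \<in> e" "b \<in> e" "a \<noteq> b" for a b
      using triple_containing_pair[OF e(1) that] by blast
    then show "e \<in> ?fan 0 1 \<union> ?fan 0 2 \<union> ?fan 1 2" using e(2) by auto
  qed
  then have "card (star012 n) \<le> card (?fan 0 1 \<union> ?fan 0 2 \<union> ?fan 1 2)" by (intro card_mono) auto
  also have "\<dots> \<le> n + n + n"
    by (meson card_Un_le card_image_lessThan_le add_mono le_trans)
  finally show ?thesis by simp
qed

lemma star012_free: "\<not> contains_copy n (star012 n) 6 M2"
  by (rule contains_copy_pairwise_intersecting[where ea="{0,1,3}" and eb="{2,4,5}"])
    (auto simp: M2_def star012_def)

lemma M2_complete_far:
  assumes "x < y" "y < z" "z < n" "3 \<le> x" "\<not> (y = x + 1 \<and> z = x + 2)"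
  shows "contains_copy n (insert {x, y, z} (star012 n)) 6 M2"
proof (cases "x + 2 \<le> y")
  case True
  then have "{0, 1, x + 1} \<in> star012 n" using star012_mem assms by simp
  then show ?thesis
    by (intro contains_copy_sorted_listI[where xs="[0, 1, x, x + 1, y, z]"])
      (use assms True in \<open>auto simp: M2_def\<close>)
next
  case False
  then have "y + 2 \<le> z" using assms by linarith
  then have "{0, 1, y + 1} \<in> star012 n" using star012_mem assms by simp
  then show ?thesis
    by (intro contains_copy_sorted_listI[where xs="[x, y, y + 1, z, n, n + 1]"])
      (use assms \<open>y + 2 \<le> z\<close> in \<open>auto simp: M2_def insert_commute\<close>)
qed

lemma M2_complete_0:
  assumes "3 \<le> y" "y < z" "z < n" "{0, y, z} \<noteq> {0, n - 2, n - 1}"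
  shows "contains_copy n (insert {0, y, z} (star012 n)) 6 M2"
proof (cases "y + 2 \<le> z")
  case True
  then have "{1, 2, y + 1} \<in> star012 n" using star012_mem assms by simp
  then show ?thesis
    by (intro contains_copy_sorted_listI[where xs="[1, 2, y, y + 1, z, n]"])
      (use assms True in \<open>auto simp: M2_def insert_commute\<close>)
next
  case False
  then have "z = y + 1" "z + 1 < n" using assms by auto
  then have "{1, 2, z + 1} \<in> star012 n" using star012_mem assms by simp
  then show ?thesis
    by (intro contains_copy_sorted_listI[where xs="[y, z, z + 1, n, n + 1, n + 2]"])
      (use assms \<open>z = y + 1\<close> \<open>z + 1 < n\<close> in \<open>auto simp: M2_def insert_commute\<close>)
qed

lemma M2_complete_1:
  assumes "6 \<le> n" "3 \<le> y" "y < z" "z < n" "{1, y, z} \<noteq> {1, 3, n - 1}"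
  shows "contains_copy n (insert {1, y, z} (star012 n)) 6 M2"
proof (cases "4 \<le> y")
  case True
  have "{0, 2, 3} \<in> star012 n" using star012_mem assms by simp
  then show ?thesis
    by (intro contains_copy_sorted_listI[where xs="[y, z, n, n + 1, n + 2, n + 3]"])
      (use assms True in \<open>auto simp: M2_def insert_commute\<close>)
next
  case False
  then have "y = 3" "z + 1 < n" using assms by auto
  then have "{0, 2, z + 1} \<in> star012 n" using star012_mem assms by simp
  then show ?thesis
    by (intro contains_copy_sorted_listI[where xs="[z + 1, n, n + 1, n + 2, n + 3, n + z]"])
      (use assms \<open>y = 3\<close> \<open>z + 1 < n\<close> in \<open>auto simp: M2_def insert_commute\<close>)
qed

lemma M2_complete_2:
  assumes "6 \<le> n" "3 \<le> y" "y < z" "z < n" "\<not> (y = 3 \<and> z = 4)"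
  shows "contains_copy n (insert {2, y, z} (star012 n)) 6 M2"
proof (cases "4 \<le> y")
  case True
  have "{0, 1, 3} \<in> star012 n" using star012_mem assms by simp
  then show ?thesis
    by (intro contains_copy_sorted_listI[where xs="[0, 1, 2, 3, y, z]"])
      (use assms True in \<open>auto simp: M2_def insert_commute\<close>)
next
  case False
  then have "y = 3" "5 \<le> z" using assms by auto
  have "{0, 1, 4} \<in> star012 n" using star012_mem assms by simp
  then show ?thesis
    by (intro contains_copy_sorted_listI[where xs="[2, 3, 4, z, n, n + 1]"])
      (use assms \<open>y = 3\<close> \<open>5 \<le> z\<close> in \<open>auto simp: M2_def insert_commute\<close>)
qed

lemma M2_upper:
  assumes n: "6 \<le> n"
  shows "sat_cyc n 6 M2 \<le> 3 * n + (n + 2)"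
proof -
  define S where "S = (\<lambda>i. {i, i + 1, i + 2}) ` {..<n} \<union> {{0, n - 2, n - 1}, {1, 3, n - 1}}"
  have complete: "\<forall>e\<in>triples n - (star012 n \<union> S). contains_copy n (insert e (star012 n)) 6 M2"
  proof
    fix e assume e: "e \<in> triples n - (star012 n \<union> S)"
    then obtain x y z where xyz: "x < y" "y < z" "z < n" "e = {x, y, z}"
      using triplesE by blast
    have "\<not> (x \<le> 1 \<and> y \<le> 2)" using e xyz star012_mem by blast
    moreover have not_consecutive: "\<not> (y = x + 1 \<and> z = x + 2)" using e xyz unfolding S_def by auto
    moreover have exceptions: "e \<noteq> {0, n - 2, n - 1}" "e \<noteq> {1, 3, n - 1}"
      using e unfolding S_def by auto
    ultimately consider "3 \<le> x" | "x = 0" "3 \<le> y" | "x = 1" "3 \<le> y" | "x = 2" "3 \<le> y"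
      using xyz by linarith
    then show "contains_copy n (insert e (star012 n)) 6 M2"
      using M2_complete_far M2_complete_0 M2_complete_1 M2_complete_2 xyz n not_consecutive exceptions
      by cases auto
  qed
  have "card (S \<inter> triples n) \<le> n + 2"
  proof -
    have "card (S \<inter> triples n) \<le> card S" by (rule card_Int_triples_le) (simp add: S_def)
    also have "\<dots> \<le> n + card {{0, n - 2, n - 1}, {1::nat, 3, n - 1}}"
      unfolding S_def using card_Un_le card_image_lessThan_le add_le_mono1 le_trans by blast
    also have "card {{0, n - 2, n - 1}, {1::nat, 3, n - 1}} \<le> 2"
      by (rule order_trans[OF card_insert_le_m1]) auto
    finally show ?thesis by simp
  qed
  then show ?thesis
    using sat_cyc_le_extension[OF _ star012_free complete] card_star012_le[of n]
    by (simp add: star012_def subset_iff)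
qed

definition fan01 :: "nat \<Rightarrow> nat set set" where
  "fan01 n = (\<lambda>j. {0, 1, j}) ` {2..<n}"

lemma fan01_mem: "2 \<le> j \<Longrightarrow> j < n \<Longrightarrow> {0, 1, j} \<in> fan01 n"
  unfolding fan01_def by auto

lemma fan01_subset_triples: "fan01 n \<subseteq> triples n"
  unfolding fan01_def using sorted_triple_in_triples[of 0 1 _ n] by auto

lemma card_fan01_le: "card (fan01 n) \<le> n"
  unfolding fan01_def using card_image_le[of "{2..<n}" "\<lambda>j. {0, 1, j}"] by simp

lemma fan01_pairwise_two_common: "\<forall>a\<in>fan01 n. \<forall>b\<in>fan01 n. a \<noteq> b \<longrightarrow> 2 \<le> card (a \<inter> b)"
proof (intro ballI impI)
  fix a b assume "a \<in> fan01 n" "b \<in> fan01 n"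
  then have "{0, 1} \<subseteq> a \<inter> b" "finite (a \<inter> b)" unfolding fan01_def by auto
  then show "2 \<le> card (a \<inter> b)" using card_mono[of "a \<inter> b" "{0, 1::nat}"] by simp
qed

lemma S1_complete_fan01:
  assumes n: "6 \<le> n" and xyz: "x < y" "y < z" "z < n"
    and not_exceptional: "\<not> (x = 0 \<and> y \<le> 2)" "\<not> (x = 1 \<and> z = n - 1)"
  shows "contains_copy n (insert {x, y, z} (fan01 n)) 5 S1"
proof -
  consider "2 \<le> x" | "x = 0" "3 \<le> y" | "x = 1" "z + 1 < n" using xyz not_exceptional by linarith
  then show ?thesis
  proof cases
    case 1
    then have "{0, 1, x} \<in> fan01 n" using fan01_mem xyz by simp
    then show ?thesis
      by (intro contains_copy_sorted_listI[where xs="[x, y, z, n, n + 1]"])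
        (use xyz 1 in \<open>auto simp: S1_def insert_commute\<close>)
  next
    case 2
    have "{0, 1, 2} \<in> fan01 n" using fan01_mem n by simp
    then show ?thesis
      by (intro contains_copy_sorted_listI[where xs="[0, 1, 2, y, z]"])
        (use xyz 2 in \<open>auto simp: S1_def\<close>)
  next
    case 3
    have "{0, 1, n - 1} \<in> fan01 n" using fan01_mem n by simp
    then show ?thesis
      by (intro contains_copy_sorted_listI[where xs="[1, y, z, n - 1, n]"])
        (use xyz 3 n in \<open>auto simp: S1_def insert_commute\<close>)
  qed
qed

lemma S1_upper:
  assumes n: "6 \<le> n"
  shows "sat_cyc n 5 S1 \<le> n + 2 * n"
proof -
  define S where "S = (\<lambda>y. {1, y, n - 1}) ` {..<n} \<union> (\<lambda>z. {0, 2, z}) ` {..<n}"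
  have free: "\<not> contains_copy n (fan01 n) 5 S1"
    by (rule contains_copy_pairwise_two_common[OF fan01_pairwise_two_common, where ea="{0,1,2}" and eb="{0,3,4}" and v=0])
      (auto simp: S1_def insert_eq_iff)
  have complete: "\<forall>e\<in>triples n - (fan01 n \<union> S). contains_copy n (insert e (fan01 n)) 5 S1"
  proof
    fix e assume e: "e \<in> triples n - (fan01 n \<union> S)"
    then obtain x y z where xyz: "x < y" "y < z" "z < n" "e = {x, y, z}"
      using triplesE by blast
    have "\<not> (x = 0 \<and> y \<le> 2)"
    proof
      assume "x = 0 \<and> y \<le> 2"
      then consider "x = 0" "y = 1" | "x = 0" "y = 2" using xyz by linarith
      then show False
      proof cases
        case 1
        then have "e \<in> fan01 n" using xyz fan01_mem[of z n] by simp
        then show False using e by blast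
      next
        case 2
        then have "e \<in> S" unfolding S_def using xyz by (intro UnI2 image_eqI[where x=z]) auto
        then show False using e by blast
      qed
    qed
    moreover have "\<not> (x = 1 \<and> z = n - 1)"
    proof
      assume "x = 1 \<and> z = n - 1"
      then have "e \<in> S" unfolding S_def using xyz by (intro UnI1 image_eqI[where x=y]) auto
      then show False using e by blast
    qed
    ultimately have "contains_copy n (insert {x, y, z} (fan01 n)) 5 S1"
      using S1_complete_fan01[OF n xyz(1-3)] by blast
    then show "contains_copy n (insert e (fan01 n)) 5 S1" using xyz(4) by simp
  qed
  have "card (S \<inter> triples n) \<le> 2 * n"
  proof -
    have "card (S \<inter> triples n) \<le> card S" by (rule card_Int_triples_le) (simp add: S_def)
    also have "\<dots> \<le> n + n" unfolding S_def by (meson card_Un_le card_image_lessThan_le add_mono le_trans)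
    finally show ?thesis by simp
  qed
  then show ?thesis
    using sat_cyc_le_extension[OF fan01_subset_triples free complete] card_fan01_le[of n] by linarith
qed

lemma S2_complete_fan01:
  assumes n: "6 \<le> n" and xyz: "x < y" "y < z" "z < n"
    and not_exceptional: "\<not> (x = 0 \<and> y = 1)" "\<not> (x = 0 \<and> z = n - 1)" "\<not> (x = 1 \<and> y = 2)"
  shows "contains_copy n (insert {x, y, z} (fan01 n)) 5 S2"
proof -
  consider "2 \<le> x" | "x = 0" "2 \<le> y" "z + 1 < n" | "x = 1" "3 \<le> y"
    using xyz not_exceptional by linarith
  then show ?thesis
  proof cases
    case 1
    then have "{0, 1, y} \<in> fan01 n" using fan01_mem xyz by simp
    then show ?thesis
      by (intro contains_copy_sorted_listI[where xs="[y, z, n, n + 1, n + x]"])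
        (use xyz 1 in \<open>auto simp: S2_def insert_commute\<close>)
  next
    case 2
    have "{0, 1, n - 1} \<in> fan01 n" using fan01_mem n by simp
    then show ?thesis
      by (intro contains_copy_sorted_listI[where xs="[0, 1, y, z, n - 1]"])
        (use xyz 2 in \<open>auto simp: S2_def insert_commute\<close>)
  next
    case 3
    have "{0, 1, 2} \<in> fan01 n" using fan01_mem n by simp
    then show ?thesis
      by (intro contains_copy_sorted_listI[where xs="[1, 2, y, z, n]"])
        (use xyz 3 n in \<open>auto simp: S2_def insert_commute\<close>)
  qed
qed

lemma S2_upper:
  assumes n: "6 \<le> n"
  shows "sat_cyc n 5 S2 \<le> n + 2 * n"
proof -
  define S where "S = (\<lambda>y. {0, y, n - 1}) ` {..<n} \<union> (\<lambda>z. {1, 2, z}) ` {..<n}"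
  have free: "\<not> contains_copy n (fan01 n) 5 S2"
    by (rule contains_copy_pairwise_two_common[OF fan01_pairwise_two_common, where ea="{0,1,4}" and eb="{0,2,3}" and v=0])
      (auto simp: S2_def insert_eq_iff)
  have complete: "\<forall>e\<in>triples n - (fan01 n \<union> S). contains_copy n (insert e (fan01 n)) 5 S2"
  proof
    fix e assume e: "e \<in> triples n - (fan01 n \<union> S)"
    then obtain x y z where xyz: "x < y" "y < z" "z < n" "e = {x, y, z}"
      using triplesE by blast
    have "\<not> (x = 0 \<and> y = 1)" using e xyz fan01_mem[of z n] by auto
    moreover have "\<not> (x = 0 \<and> z = n - 1)"
    proof
      assume "x = 0 \<and> z = n - 1"
      then have "e \<in> S" unfolding S_def using xyz by (intro UnI1 image_eqI[where x=y]) auto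
      then show False using e by blast
    qed
    moreover have "\<not> (x = 1 \<and> y = 2)"
    proof
      assume "x = 1 \<and> y = 2"
      then have "e \<in> S" unfolding S_def using xyz by (intro UnI2 image_eqI[where x=z]) auto
      then show False using e by blast
    qed
    ultimately have "contains_copy n (insert {x, y, z} (fan01 n)) 5 S2"
      using S2_complete_fan01[OF n xyz(1-3)] by blast
    then show "contains_copy n (insert e (fan01 n)) 5 S2" using xyz(4) by simp
  qed
  have "card (S \<inter> triples n) \<le> 2 * n"
  proof -
    have "card (S \<inter> triples n) \<le> card S" by (rule card_Int_triples_le) (simp add: S_def)
    also have "\<dots> \<le> n + n" unfolding S_def by (meson card_Un_le card_image_lessThan_le add_mono le_trans)
    finally show ?thesis by simp
  qed
  then show ?thesis
    using sat_cyc_le_extension[OF fan01_subset_triples free complete] card_fan01_le[of n] by linarith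
qed

definition matched_fans :: "nat \<Rightarrow> nat set set" where
  "matched_fans n = {e \<in> triples n. \<exists>k b. e = {2 * k, 2 * k + 1, b} \<and> 2 * k + 1 < b}"

lemma matched_fans_mem: "2 * k + 1 < b \<Longrightarrow> b < n \<Longrightarrow> {2 * k, 2 * k + 1, b} \<in> matched_fans n"
  unfolding matched_fans_def using sorted_triple_in_triples[of "2 * k" "2 * k + 1" b n] by auto

lemma matched_triples_common:
  fixes u k b k' b' :: nat
  assumes "u \<in> {2 * k, 2 * k + 1, b}" "u \<in> {2 * k', 2 * k' + 1, b'}" "k < k'" "2 * k' + 1 < b'"
  shows "u = b"
proof -
  have "2 * k' \<le> u" using assms(2,4) by auto
  then show ?thesis using assms(1,3) by auto
qed

lemma matched_fans_two_common:
  assumes "e \<in> matched_fans n" "f \<in> matched_fans n" "e \<noteq> f"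
    and "u \<in> e" "u \<in> f" "w \<in> e" "w \<in> f" "u \<noteq> w"
  obtains k where "{u, w} = {2 * k, 2 * k + 1}"
proof -
  obtain k b where e: "e = {2 * k, 2 * k + 1, b}" "2 * k + 1 < b"
    using assms(1) unfolding matched_fans_def by blast
  obtain k' b' where f: "f = {2 * k', 2 * k' + 1, b'}" "2 * k' + 1 < b'"
    using assms(2) unfolding matched_fans_def by blast
  have "k = k'"
  proof (rule ccontr)
    assume "k \<noteq> k'"
    then consider "k < k'" | "k' < k" by linarith
    then show False
      using matched_triples_common[of u k b k' b'] matched_triples_common[of w k b k' b']
        matched_triples_common[of u k' b' k b] matched_triples_common[of w k' b' k b]
        assms(4-8) e f by cases auto
  qed
  then have "b \<noteq> b'" using e f assms(3) by auto
  then have "u \<in> {2 * k, 2 * k + 1}" "w \<in> {2 * k, 2 * k + 1}"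
    using assms(4-7) e f \<open>k = k'\<close> by auto
  then show ?thesis using that assms(8) by auto
qed

lemma matched_fans_free: "\<not> contains_copy n (matched_fans n) 4 D1"
proof
  assume "contains_copy n (matched_fans n) 4 D1"
  then obtain phi where emb: "cyc_embedding 4 n phi"
    and e: "{phi 0, phi 1, phi 2} \<in> matched_fans n" and f: "{phi 0, phi 2, phi 3} \<in> matched_fans n"
    unfolding contains_copy_def D1_def by auto
  have "{phi 0, phi 1, phi 2} \<noteq> {phi 0, phi 2, phi 3}" "phi 0 \<noteq> phi 2"
    using cyc_embedding_neq[OF emb] by (auto simp: insert_eq_iff)
  then obtain k where k: "{phi 0, phi 2} = {2 * k, 2 * k + 1}"
    using matched_fans_two_common[OF e f] by (metis insertCI)
  have "cyc (phi 0) (phi 1) (phi 2)" "cyc (phi 2) (phi 3) (phi 0)"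
    using cyc_embedding_cyc[OF emb] unfolding cyc_def by auto
  with k show False using cyc_adjacent by (auto simp: doubleton_eq_iff)
qed

lemma matched_fans_complete:
  assumes "x < y" "y < z" "z < n" "{x, y, z} \<notin> matched_fans n"
  shows "contains_copy n (insert {x, y, z} (matched_fans n)) 4 D1"
proof (cases "even x")
  case True
  then obtain k where k: "x = 2 * k" by (rule evenE)
  have "y \<noteq> x + 1" using assms k matched_fans_mem[of k z n] by auto
  then have "{x, x + 1, y} \<in> matched_fans n" using matched_fans_mem[of k y n] assms k by simp
  then show ?thesis
    by (intro contains_copy_sorted_listI[where xs="[x, x + 1, y, z]"])
      (use assms \<open>y \<noteq> x + 1\<close> in \<open>auto simp: D1_def\<close>)
next
  case False
  then obtain k where k: "x = 2 * k + 1" using oddE by blast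
  have "{x - 1, x, z} \<in> matched_fans n" using matched_fans_mem[of k z n] assms k by simp
  then show ?thesis
    by (intro contains_copy_sorted_listI[where xs="[x, y, z, n + x - 1]"])
      (use assms k in \<open>auto simp: D1_def insert_commute\<close>)
qed

lemma card_matched_fans_le: "card (matched_fans n) \<le> n * n"
proof -
  let ?f = "\<lambda>(a, b). {2 * (a div 2), 2 * (a div 2) + 1, b}"
  have "matched_fans n \<subseteq> ?f ` ({..<n} \<times> {..<n})"
  proof
    fix e assume "e \<in> matched_fans n"
    then obtain k b where "e = {2 * k, 2 * k + 1, b}" "2 * k + 1 < b" "e \<in> triples n"
      unfolding matched_fans_def by blast
    moreover then have "b < n" unfolding triples_def by auto
    ultimately show "e \<in> ?f ` ({..<n} \<times> {..<n})" by (intro image_eqI[where x="(2 * k, b)"]) auto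
  qed
  then show ?thesis using card_image_lessThan_square_le[of ?f n]
    by (meson card_mono finite_SigmaI finite_imageI finite_lessThan le_trans)
qed

lemma D1_upper: "sat_cyc n 4 D1 \<le> n * n"
proof -
  have complete: "\<forall>e\<in>triples n - (matched_fans n \<union> {}). contains_copy n (insert e (matched_fans n)) 4 D1"
  proof
    fix e assume e: "e \<in> triples n - (matched_fans n \<union> {})"
    then obtain x y z where xyz: "x < y" "y < z" "z < n" "e = {x, y, z}" using triplesE by blast
    then show "contains_copy n (insert e (matched_fans n)) 4 D1"
      using matched_fans_complete[OF xyz(1-3)] e by simp
  qed
  have "matched_fans n \<subseteq> triples n" unfolding matched_fans_def by blast
  then show ?thesis
    using sat_cyc_le_extension[OF _ matched_fans_free complete] card_matched_fans_le[of n] by simp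
qed

text \<open>In a \<open>D\<^sub>2\<close>-free hypergraph an edge is determined by its two smallest vertices.\<close>

lemma card_D2_free_le:
  assumes H: "H \<subseteq> triples n" and free: "\<not> contains_copy n H 4 D2"
  shows "card H \<le> n * n"
proof -
  define key where "key e = (Min e, Min (e - {Min e}))" for e :: "nat set"
  have key: "key {x, y, z} = (x, y)" if "x < y" "y < z" for x y z
  proof -
    have "Min {x, y, z} = x" "{x, y, z} - {x} = {y, z}" using that by (auto simp: min_def)
    then show ?thesis using that unfolding key_def by simp
  qed
  have "inj_on key H"
  proof (rule inj_onI)
    fix e f assume e: "e \<in> H" and f: "f \<in> H" and ef: "key e = key f"
    obtain x y z where xyz: "x < y" "y < z" "z < n" "e = {x, y, z}" using triplesE e H by blast
    obtain x' y' z' where xyz': "x' < y'" "y' < z'" "z' < n" "f = {x', y', z'}"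
      using triplesE f H by blast
    then have z': "y < z'" "z' < n" "f = {x, y, z'}" using ef key[of x y z] key[of x' y' z'] xyz by auto
    show "e = f"
    proof (rule ccontr)
      assume "e \<noteq> f"
      then consider "z < z'" | "z' < z" using xyz z' by fastforce
      then have "contains_copy n H 4 D2"
        by cases (intro contains_copy_sorted_listI[where xs="[x, y, min z z', max z z']"];
            use xyz z' e f in \<open>auto simp: D2_def\<close>)+
      then show False using free by blast
    qed
  qed
  moreover have "key ` H \<subseteq> {..<n} \<times> {..<n}"
  proof
    fix p assume "p \<in> key ` H"
    then obtain e where "e \<in> H" "p = key e" by blast
    moreover obtain x y z where "x < y" "y < z" "z < n" "e = {x, y, z}"
      using triplesE \<open>e \<in> H\<close> H by blast
    ultimately show "p \<in> {..<n} \<times> {..<n}" using key by simp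
  qed
  then have "card (key ` H) \<le> n * n"
    using card_mono[of "{..<n} \<times> {..<n}" "key ` H"] by (simp add: card_cartesian_product)
  ultimately show ?thesis using card_image by metis
qed

lemma D2_upper: "sat_cyc n 4 D2 \<le> n * n"
proof -
  obtain H where "saturated n 4 D2 H" "sat_cyc n 4 D2 = card H"
    using sat_cyc_attained[of D2] by (auto simp: D2_def)
  then show ?thesis using card_D2_free_le saturatedD by metis
qed

section \<open>The recursive construction for \<open>S\<^sub>3\<close>\<close>

function S3_tree :: "nat \<Rightarrow> nat \<Rightarrow> nat set set" where
  "S3_tree l s = (if s < 3 then {} else
      (\<lambda>j. {l, l + s div 2, j}) ` ({l<..<l + s} - {l + s div 2})
      \<union> S3_tree (l + 1) (s div 2 - 1) \<union> S3_tree (l + s div 2 + 1) (s - s div 2 - 1))"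
  by pat_completeness auto
termination by (relation "measure (\<lambda>(l, s). s)") auto

text \<open>\<open>S3_exceptions l s\<close> collects the triples of \<open>[l, l + s)\<close> for which the completion argument
  below finds no copy of \<open>S\<^sub>3\<close>; they are the triples added greedily during saturation.\<close>

function S3_exceptions :: "nat \<Rightarrow> nat \<Rightarrow> nat set set" where
  "S3_exceptions l s = (if s < 3 then {} else
      (\<lambda>y. {l, y, y + 1}) ` {l..<l + s} \<union> (\<lambda>y. {l + s div 2, y, y + 1}) ` {l..<l + s}
      \<union> {{l, l + 1, l + s - 1}, {l + s div 2 - 1, l + s div 2, l + s div 2 + 1}}
      \<union> S3_exceptions (l + 1) (s div 2 - 1) \<union> S3_exceptions (l + s div 2 + 1) (s - s div 2 - 1))"
  by pat_completeness auto
termination by (relation "measure (\<lambda>(l, s). s)") auto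
declare S3_tree.simps [simp del] S3_exceptions.simps [simp del]

lemma S3_tree_small: "s < 3 \<Longrightarrow> S3_tree l s = {}"
  by (simp add: S3_tree.simps)

lemma S3_exceptions_small: "s < 3 \<Longrightarrow> S3_exceptions l s = {}"
  by (simp add: S3_exceptions.simps)

lemma S3_tree_rec:
  "3 \<le> s \<Longrightarrow> S3_tree l s = (\<lambda>j. {l, l + s div 2, j}) ` ({l<..<l + s} - {l + s div 2})
      \<union> S3_tree (l + 1) (s div 2 - 1) \<union> S3_tree (l + s div 2 + 1) (s - s div 2 - 1)"
  by (subst S3_tree.simps) simp

lemma S3_exceptions_rec:
  "3 \<le> s \<Longrightarrow> S3_exceptions l s =
      (\<lambda>y. {l, y, y + 1}) ` {l..<l + s} \<union> (\<lambda>y. {l + s div 2, y, y + 1}) ` {l..<l + s}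
      \<union> {{l, l + 1, l + s - 1}, {l + s div 2 - 1, l + s div 2, l + s div 2 + 1}}
      \<union> S3_exceptions (l + 1) (s div 2 - 1) \<union> S3_exceptions (l + s div 2 + 1) (s - s div 2 - 1)"
  by (subst S3_exceptions.simps) simp

lemma S3_tree_root: "3 \<le> s \<Longrightarrow> l < j \<Longrightarrow> j < l + s \<Longrightarrow> j \<noteq> l + s div 2 \<Longrightarrow>
    {l, l + s div 2, j} \<in> S3_tree l s"
  by (subst S3_tree_rec) auto

lemma S3_tree_left: "3 \<le> s \<Longrightarrow> S3_tree (l + 1) (s div 2 - 1) \<subseteq> S3_tree l s"
  by (subst (2) S3_tree_rec) auto

lemma S3_tree_right: "3 \<le> s \<Longrightarrow> S3_tree (l + s div 2 + 1) (s - s div 2 - 1) \<subseteq> S3_tree l s"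
  by (subst (2) S3_tree_rec) auto

lemma S3_exceptions_left: "3 \<le> s \<Longrightarrow> S3_exceptions (l + 1) (s div 2 - 1) \<subseteq> S3_exceptions l s"
  by (subst (2) S3_exceptions_rec) auto

lemma S3_exceptions_right:
  "3 \<le> s \<Longrightarrow> S3_exceptions (l + s div 2 + 1) (s - s div 2 - 1) \<subseteq> S3_exceptions l s"
  by (subst (2) S3_exceptions_rec) auto

lemma S3_exceptions_mem:
  assumes "3 \<le> s"
  shows "l \<le> y \<Longrightarrow> y < l + s \<Longrightarrow> {l, y, y + 1} \<in> S3_exceptions l s"
    and "l \<le> y \<Longrightarrow> y < l + s \<Longrightarrow> {l + s div 2, y, y + 1} \<in> S3_exceptions l s"
    and "{l, l + 1, l + s - 1} \<in> S3_exceptions l s"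
    and "{l + s div 2 - 1, l + s div 2, l + s div 2 + 1} \<in> S3_exceptions l s"
  by (subst S3_exceptions_rec[OF assms]; auto)+

lemma finite_S3_exceptions: "finite (S3_exceptions l s)"
proof (induction s arbitrary: l rule: less_induct)
  case (less s)
  show ?case
  proof (cases "s < 3")
    case True then show ?thesis using S3_exceptions_small by simp
  next
    case False
    then have "s div 2 - 1 < s" "s - s div 2 - 1 < s" by auto
    then show ?thesis using less.IH S3_exceptions_rec[of s l] False by simp
  qed
qed

lemma S3_tree_triples: "e \<in> S3_tree l s \<Longrightarrow> e \<subseteq> {l..<l + s} \<and> card e = 3"
proof (induction s arbitrary: l e rule: less_induct)
  case (less s)
  show ?case
  proof (cases "s < 3")
    case True then show ?thesis using less.prems S3_tree_small by simp
  next
    case False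
    then have s: "3 \<le> s" "s div 2 - 1 < s" "s - s div 2 - 1 < s" by auto
    from less.prems[unfolded S3_tree_rec[OF s(1)]] consider
        j where "e = {l, l + s div 2, j}" "j \<in> {l<..<l + s} - {l + s div 2}"
      | "e \<in> S3_tree (l + 1) (s div 2 - 1)"
      | "e \<in> S3_tree (l + s div 2 + 1) (s - s div 2 - 1)" by blast
    then show ?thesis
    proof cases
      case 1 then show ?thesis using s by auto
    next
      case 2 then show ?thesis using less.IH[OF s(2) 2] s by fastforce
    next
      case 3 then show ?thesis using less.IH[OF s(3) 3] s by fastforce
    qed
  qed
qed

lemma halves_power_bound:
  fixes s k :: nat
  assumes "3 \<le> s" "s < 2 ^ k"
  shows "s div 2 - 1 < 2 ^ (k - 1)" "s - s div 2 - 1 < 2 ^ (k - 1)"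
    and "s + (s div 2 - 1) * (k - 1) + (s - s div 2 - 1) * (k - 1) \<le> s * k"
proof -
  obtain k' where k: "k = Suc k'" using assms by (cases k) auto
  then have "s < 2 * 2 ^ (k - 1)" using assms(2) by simp
  then show "s div 2 - 1 < 2 ^ (k - 1)" "s - s div 2 - 1 < 2 ^ (k - 1)" by linarith+
  have "s div 2 - 1 + (s - s div 2 - 1) \<le> s" by linarith
  then have "(s div 2 - 1 + (s - s div 2 - 1)) * k' \<le> s * k'" by (rule mult_le_mono1)
  then show "s + (s div 2 - 1) * (k - 1) + (s - s div 2 - 1) * (k - 1) \<le> s * k"
    unfolding k by (simp add: add_mult_distrib)
qed

lemma card_S3_tree_le: "s < 2 ^ k \<Longrightarrow> card (S3_tree l s) \<le> s * k"
proof (induction s arbitrary: l k rule: less_induct)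
  case (less s)
  show ?case
  proof (cases "s < 3")
    case True then show ?thesis using S3_tree_small by simp
  next
    case False
    then have s: "3 \<le> s" "s div 2 - 1 < s" "s - s div 2 - 1 < s" by auto
    let ?root = "(\<lambda>j. {l, l + s div 2, j}) ` ({l<..<l + s} - {l + s div 2})"
    let ?left = "S3_tree (l + 1) (s div 2 - 1)"
    let ?right = "S3_tree (l + s div 2 + 1) (s - s div 2 - 1)"
    have "card ?root \<le> card ({l<..<l + s} - {l + s div 2})" by (rule card_image_le) simp
    also have "\<dots> \<le> s" using card_Diff1_le[of "{l<..<l + s}" "l + s div 2"] by simp
    finally have "card ?root \<le> s" .
    moreover have "card ?left \<le> (s div 2 - 1) * (k - 1)" "card ?right \<le> (s - s div 2 - 1) * (k - 1)"
      using less.IH[OF s(2) halves_power_bound(1)[OF s(1) less.prems]]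
        less.IH[OF s(3) halves_power_bound(2)[OF s(1) less.prems]] by simp_all
    ultimately show ?thesis
      unfolding S3_tree_rec[OF s(1)]
      using card_Un_le[of "?root \<union> ?left" ?right] card_Un_le[of ?root ?left]
        halves_power_bound(3)[OF s(1) less.prems] by linarith
  qed
qed

lemma card_S3_exceptions_le: "s < 2 ^ k \<Longrightarrow> card (S3_exceptions l s) \<le> 4 * s * k"
proof (induction s arbitrary: l k rule: less_induct)
  case (less s)
  show ?case
  proof (cases "s < 3")
    case True then show ?thesis using S3_exceptions_small by simp
  next
    case False
    then have s: "3 \<le> s" "s div 2 - 1 < s" "s - s div 2 - 1 < s" by auto
    let ?pair = "{{l, l + 1, l + s - 1}, {l + s div 2 - 1, l + s div 2, l + s div 2 + 1}}"
    let ?root = "(\<lambda>y. {l, y, y + 1}) ` {l..<l + s} \<union> (\<lambda>y. {l + s div 2, y, y + 1}) ` {l..<l + s} \<union> ?pair"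
    let ?left = "S3_exceptions (l + 1) (s div 2 - 1)"
    let ?right = "S3_exceptions (l + s div 2 + 1) (s - s div 2 - 1)"
    have "card ((\<lambda>y. {l, y, y + 1}) ` {l..<l + s}) \<le> s"
      "card ((\<lambda>y. {l + s div 2, y, y + 1}) ` {l..<l + s}) \<le> s"
      using card_image_le[of "{l..<l + s}"] by fastforce+
    moreover have "card ?pair \<le> 2" by (rule order_trans[OF card_insert_le_m1]) auto
    ultimately have "card ?root \<le> s + s + 2" by (meson add_mono card_Un_le le_trans)
    then have "card ?root \<le> 4 * s" using s(1) by linarith
    moreover have "card ?left \<le> 4 * (s div 2 - 1) * (k - 1)" "card ?right \<le> 4 * (s - s div 2 - 1) * (k - 1)"
      using less.IH[OF s(2) halves_power_bound(1)[OF s(1) less.prems]]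
        less.IH[OF s(3) halves_power_bound(2)[OF s(1) less.prems]] by simp_all
    ultimately show ?thesis
      unfolding S3_exceptions_rec[OF s(1)]
      using card_Un_le[of "?root \<union> ?left" ?right] card_Un_le[of ?root ?left]
        halves_power_bound(3)[OF s(1) less.prems] by linarith
  qed
qed

text \<open>Two edges sharing exactly one vertex whose remaining pairs interleave on the circle:
  this is what a copy of \<open>S\<^sub>3\<close> consists of.\<close>

definition crossing :: "nat set \<Rightarrow> nat set \<Rightarrow> bool" where
  "crossing e f \<longleftrightarrow> (\<exists>v a b c d. e = {v, a, b} \<and> f = {v, c, d} \<and> distinct [v, a, b, c, d] \<and>
     cyc a c b \<and> cyc b d a)"

lemma contains_copy_S3_crossing:
  assumes "contains_copy n H 5 S3"
  obtains e f where "e \<in> H" "f \<in> H" "crossing e f"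
proof -
  obtain phi where emb: "cyc_embedding 5 n phi"
    and im: "{phi 0, phi 1, phi 3} \<in> H" "{phi 0, phi 2, phi 4} \<in> H"
    using assms unfolding contains_copy_def S3_def by auto
  have "cyc (phi 1) (phi 2) (phi 3)" "cyc (phi 3) (phi 4) (phi 1)"
    using cyc_embedding_cyc[OF emb, of 1 2 3] cyc_embedding_cyc[OF emb, of 3 4 1]
    unfolding cyc_def by auto
  moreover have "distinct [phi 0, phi 1, phi 3, phi 2, phi 4]"
    using cyc_embedding_neq[OF emb] by auto
  ultimately have "crossing {phi 0, phi 1, phi 3} {phi 0, phi 2, phi 4}"
    unfolding crossing_def by blast
  then show ?thesis using that im by blast
qed

lemma crossing_sym: "crossing e f \<Longrightarrow> crossing f e"
  unfolding crossing_def
proof (elim exE conjE)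
  fix v a b c d
  assume e: "e = {v, a, b}" and f: "f = {v, c, d}" and distinct: "distinct [v, a, b, c, d]"
    and cyc: "cyc a c b" "cyc b d a"
  have "e = {v, b, a}" using e by (simp add: insert_commute)
  moreover have "distinct [v, c, d, b, a]" using distinct by auto
  moreover have "cyc c b d" "cyc d a c" using cyc cyc_interleave by blast+
  ultimately show "\<exists>v a b c d. f = {v, a, b} \<and> e = {v, c, d} \<and> distinct [v, a, b, c, d] \<and>
      cyc a c b \<and> cyc b d a"
    using f by blast
qed

lemma crossing_Int: "crossing e f \<Longrightarrow> e \<inter> f \<noteq> {}"
  unfolding crossing_def by auto

lemma crossing_one_common: "crossing e f \<Longrightarrow> u \<in> e \<inter> f \<Longrightarrow> w \<in> e \<inter> f \<Longrightarrow> u = w"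
  unfolding crossing_def by auto

lemma crossing_root_fan:
  assumes "crossing e f" and e: "e = {l, m, j}" "l < j" "j < u" and "l < m" "m < u"
    and f: "f \<subseteq> {l<..<m} \<or> f \<subseteq> {m<..<u}"
  shows False
proof -
  obtain v a b c d where h: "e = {v, a, b}" "f = {v, c, d}" "distinct [v, a, b, c, d]"
    "cyc a c b" "cyc b d a"
    using assms(1) unfolding crossing_def by blast
  have in_f: "v \<in> f" "c \<in> f" "d \<in> f" using h(2) by auto
  then have "v \<noteq> l" "v \<noteq> m" using f \<open>l < m\<close> by auto
  then have "v = j" using h(1) e by auto
  then have "a \<in> {l, m}" "b \<in> {l, m}" using h(1,3) e by auto
  then have "(a = l \<and> b = m) \<or> (a = m \<and> b = l)" using h(3) by auto
  moreover have "(l < c \<and> c < m \<and> l < d \<and> d < m) \<or> (m < c \<and> c < u \<and> m < d \<and> d < u)"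
    using f in_f(2,3) by auto
  ultimately show False using h(4,5) \<open>l < m\<close> unfolding cyc_def by (elim disjE conjE; linarith)
qed

lemma S3_subtree_ranges:
  assumes "3 \<le> s"
  shows "e \<in> S3_tree (l + 1) (s div 2 - 1) \<Longrightarrow> e \<subseteq> {l<..<l + s div 2}"
    and "e \<in> S3_tree (l + s div 2 + 1) (s - s div 2 - 1) \<Longrightarrow> e \<subseteq> {l + s div 2<..<l + s}"
proof -
  assume "e \<in> S3_tree (l + 1) (s div 2 - 1)"
  then have "e \<subseteq> {l + 1..<l + 1 + (s div 2 - 1)}" using S3_tree_triples by blast
  also have "\<dots> \<subseteq> {l<..<l + s div 2}" by auto
  finally show "e \<subseteq> {l<..<l + s div 2}" .
next
  assume "e \<in> S3_tree (l + s div 2 + 1) (s - s div 2 - 1)"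
  then have "e \<subseteq> {l + s div 2 + 1..<l + s div 2 + 1 + (s - s div 2 - 1)}" using S3_tree_triples by blast
  also have "\<dots> \<subseteq> {l + s div 2<..<l + s}" using assms by auto
  finally show "e \<subseteq> {l + s div 2<..<l + s}" .
qed

lemma S3_tree_no_crossing: "e \<in> S3_tree l s \<Longrightarrow> f \<in> S3_tree l s \<Longrightarrow> \<not> crossing e f"
proof (induction s arbitrary: l e f rule: less_induct)
  case (less s)
  show ?case
  proof (cases "s < 3")
    case True then show ?thesis using less.prems S3_tree_small by simp
  next
    case False
    then have s: "3 \<le> s" "s div 2 - 1 < s" "s - s div 2 - 1 < s" by auto
    define m where "m = l + s div 2"
    have lm: "l < m" "m < l + s" unfolding m_def using s by auto
    define Root where "Root = (\<lambda>j. {l, m, j}) ` ({l<..<l + s} - {m})"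
    define Left where "Left = S3_tree (l + 1) (s div 2 - 1)"
    define Right where "Right = S3_tree (m + 1) (s - s div 2 - 1)"
    have tree: "S3_tree l s = Root \<union> Left \<union> Right"
      unfolding Root_def Left_def Right_def m_def using S3_tree_rec[OF s(1)] by simp
    have left: "g \<subseteq> {l<..<m}" if "g \<in> Left" for g
      using S3_subtree_ranges(1)[OF s(1) that[unfolded Left_def]] unfolding m_def .
    have right: "g \<subseteq> {m<..<l + s}" if "g \<in> Right" for g
      using S3_subtree_ranges(2)[OF s(1) that[unfolded Right_def m_def]] unfolding m_def .
    have root_child: "\<not> crossing g h" if g: "g \<in> Root" and h: "h \<in> Left \<union> Right" for g h
    proof
      assume "crossing g h"
      moreover obtain j where "g = {l, m, j}" "j \<in> {l<..<l + s} - {m}"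
        using g unfolding Root_def by (rule imageE)
      moreover have "h \<subseteq> {l<..<m} \<or> h \<subseteq> {m<..<l + s}" using h left right by blast
      ultimately show False using crossing_root_fan[of g h l m j "l + s"] lm by auto
    qed
    have "\<not> crossing g h" if "g \<in> Root" "h \<in> Root" for g h
    proof
      assume "crossing g h"
      moreover have "l \<in> g \<inter> h" "m \<in> g \<inter> h" using that unfolding Root_def by auto
      ultimately show False using crossing_one_common lm by blast
    qed
    moreover have "\<not> crossing g h" if "g \<in> Left" "h \<in> Right" for g h
    proof
      assume "crossing g h"
      then have "g \<inter> h \<noteq> {}" by (rule crossing_Int)
      then show False using left[OF that(1)] right[OF that(2)] by fastforce
    qed
    moreover have "\<not> crossing g h" if "g \<in> Left \<union> Right" "h \<in> Root" for g h
      using root_child[OF that(2,1)] crossing_sym by blast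
    moreover have "\<not> crossing g h" if "g \<in> Right" "h \<in> Left" for g h
    proof
      assume "crossing g h"
      then have "g \<inter> h \<noteq> {}" by (rule crossing_Int)
      then show False using left[OF that(2)] right[OF that(1)] by fastforce
    qed
    moreover have "\<not> crossing g h" if "g \<in> Left" "h \<in> Left" for g h
      using that less.IH[OF s(2)] unfolding Left_def by blast
    moreover have "\<not> crossing g h" if "g \<in> Right" "h \<in> Right" for g h
      using that less.IH[OF s(3)] unfolding Right_def m_def by blast
    ultimately show ?thesis using less.prems root_child unfolding tree by blast
  qed
qed

lemma S3_tree_complete_at_root:
  assumes s: "3 \<le> s" "l + s \<le> n" and yz: "l < y" "y < z" "z < l + s"
    and new: "{l, y, z} \<notin> S3_tree l s" "{l, y, z} \<notin> S3_exceptions l s"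
  shows "contains_copy n (insert {l, y, z} (S3_tree l s)) 5 S3"
proof -
  define m where "m = l + s div 2"
  have lm: "l < m" "m < l + s" unfolding m_def using s by auto
  have root: "{l, m, j} \<in> S3_tree l s" if "l < j" "j < l + s" "j \<noteq> m" for j
    using S3_tree_root[OF s(1) that(1,2)] that(3) unfolding m_def by simp
  have "y \<noteq> m" "z \<noteq> m" using new(1) root[of z] root[of y] yz by (auto simp: insert_commute)
  then consider "y < m" "m < z" | "z < m" | "m < y" using yz by linarith
  then show ?thesis
  proof cases
    case 1
    show ?thesis
    proof (cases "z + 1 < l + s")
      case True
      then have "{l, m, z + 1} \<in> S3_tree l s" using root 1 yz by simp
      then show ?thesis
        by (intro contains_copy_sorted_listI[where xs="[l, y, m, z, z + 1]"])
          (use True 1 yz s in \<open>auto simp: S3_def insert_commute\<close>)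
    next
      case False
      then have z: "z = l + s - 1" using yz by linarith
      then have "y \<noteq> l + 1" using new(2) S3_exceptions_mem(3)[OF s(1), of l] by auto
      then have "{l, m, l + 1} \<in> S3_tree l s" using root 1 yz by simp
      then show ?thesis
        by (intro contains_copy_sorted_listI[where xs="[l, l + 1, y, m, z]"])
          (use \<open>y \<noteq> l + 1\<close> 1 yz s in \<open>auto simp: S3_def insert_commute\<close>)
    qed
  next
    case 2
    have "z \<noteq> y + 1" using new(2) S3_exceptions_mem(1)[OF s(1), of l y] yz by auto
    then have "{l, m, y + 1} \<in> S3_tree l s" using root 2 yz by simp
    then show ?thesis
      by (intro contains_copy_sorted_listI[where xs="[l, y, y + 1, z, m]"])
        (use \<open>z \<noteq> y + 1\<close> 2 yz s lm in \<open>auto simp: S3_def insert_commute\<close>)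
  next
    case 3
    have "z \<noteq> y + 1" using new(2) S3_exceptions_mem(1)[OF s(1), of l y] yz by auto
    then have "{l, m, y + 1} \<in> S3_tree l s" using root 3 yz by simp
    then show ?thesis
      by (intro contains_copy_sorted_listI[where xs="[l, m, y, y + 1, z]"])
        (use \<open>z \<noteq> y + 1\<close> 3 yz s lm in \<open>auto simp: S3_def insert_commute\<close>)
  qed
qed

lemma S3_tree_complete_end_at_middle:
  assumes s: "3 \<le> s" "l + s \<le> n" and xyz: "l < x" "x < y" "y < z" "z < l + s"
    and mid: "x = l + s div 2 \<or> z = l + s div 2"
    and new: "{x, y, z} \<notin> S3_tree l s" "{x, y, z} \<notin> S3_exceptions l s"
  shows "contains_copy n (insert {x, y, z} (S3_tree l s)) 5 S3"
proof -
  define m where "m = l + s div 2"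
  have lm: "l < m" "m < l + s" unfolding m_def using s by auto
  have root: "{l, m, j} \<in> S3_tree l s" if "l < j" "j < l + s" "j \<noteq> m" for j
    using S3_tree_root[OF s(1) that(1,2)] that(3) unfolding m_def by simp
  have exc: "{m, j, j + 1} \<in> S3_exceptions l s" if "l \<le> j" "j < l + s" for j
    using S3_exceptions_mem(2)[OF s(1) that] unfolding m_def .
  from mid show ?thesis
  proof (elim disjE)
    assume x: "x = l + s div 2"
    have "z \<noteq> y + 1" using new(2) exc[of y] x xyz unfolding m_def by auto
    then have "{l, m, y + 1} \<in> S3_tree l s" using root x xyz unfolding m_def by simp
    then show ?thesis
      by (intro contains_copy_sorted_listI[where xs="[m, y, y + 1, z, n + l]"])
        (use \<open>z \<noteq> y + 1\<close> x xyz s lm in \<open>auto simp: S3_def insert_commute m_def\<close>)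
  next
    assume z: "z = l + s div 2"
    have "y \<noteq> x + 1" using new(2) exc[of x] z xyz unfolding m_def by (auto simp: insert_commute)
    then have "{l, m, x + 1} \<in> S3_tree l s" using root z xyz unfolding m_def by simp
    then show ?thesis
      by (intro contains_copy_sorted_listI[where xs="[m, n + l, n + x, n + x + 1, n + y]"])
        (use \<open>y \<noteq> x + 1\<close> z xyz s lm in \<open>auto simp: S3_def insert_commute m_def\<close>)
  qed
qed

lemma S3_tree_complete_through_middle:
  assumes s: "3 \<le> s" "l + s \<le> n" and xyz: "l < x" "x < y" "y < z" "z < l + s"
    and mid: "x < l + s div 2" "l + s div 2 < z"
    and new: "{x, y, z} \<notin> S3_tree l s" "{x, y, z} \<notin> S3_exceptions l s"
  shows "contains_copy n (insert {x, y, z} (S3_tree l s)) 5 S3"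
proof -
  define m where "m = l + s div 2"
  have lm: "l < m" "m < l + s" "x < m" "m < z" unfolding m_def using s mid by auto
  have root: "{l, m, j} \<in> S3_tree l s" if "l < j" "j < l + s" "j \<noteq> m" for j
    using S3_tree_root[OF s(1) that(1,2)] that(3) unfolding m_def by simp
  consider "y = m" "m + 1 < z" | "y = m" "z = m + 1" | "y < m" | "m < y" using lm xyz by linarith
  then show ?thesis
  proof cases
    case 1
    then have "{l, m, m + 1} \<in> S3_tree l s" using root xyz lm by simp
    then show ?thesis
      by (intro contains_copy_sorted_listI[where xs="[m, m + 1, z, n + l, n + x]"])
        (use 1 xyz s lm in \<open>auto simp: S3_def insert_commute\<close>)
  next
    case 2
    then have "x \<noteq> m - 1"
      using new(2) S3_exceptions_mem(4)[OF s(1), of l] lm unfolding m_def by auto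
    then have "x + 1 < m" using xyz lm by linarith
    obtain p where p: "m = Suc p" using lm by (cases m) auto
    then have "{l, m, p} \<in> S3_tree l s" using root \<open>x + 1 < m\<close> xyz lm by simp
    then show ?thesis
      by (intro contains_copy_sorted_listI[where xs="[m, z, n + l, n + x, n + p]"])
        (use \<open>x + 1 < m\<close> p 2 xyz s lm in \<open>auto simp: S3_def insert_commute\<close>)
  next
    case 3
    then have "{l, m, y} \<in> S3_tree l s" using root xyz by simp
    then show ?thesis
      by (intro contains_copy_sorted_listI[where xs="[y, m, z, n + l, n + x]"])
        (use 3 xyz s lm in \<open>auto simp: S3_def insert_commute\<close>)
  next
    case 4
    then have "{l, m, y} \<in> S3_tree l s" using root xyz lm by simp
    then show ?thesis
      by (intro contains_copy_sorted_listI[where xs="[y, z, n + l, n + x, n + m]"])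
        (use 4 xyz s lm in \<open>auto simp: S3_def insert_commute\<close>)
  qed
qed

lemma S3_tree_complete:
  assumes "l + s \<le> n" "l \<le> x" "x < y" "y < z" "z < l + s"
    and "{x, y, z} \<notin> S3_tree l s" "{x, y, z} \<notin> S3_exceptions l s"
  shows "contains_copy n (insert {x, y, z} (S3_tree l s)) 5 S3"
  using assms
proof (induction s arbitrary: l rule: less_induct)
  case (less s)
  note ls = less.prems(1) and xyz = less.prems(2-5) and new = less.prems(6,7)
  have s3: "3 \<le> s" using xyz by linarith
  define m where "m = l + s div 2"
  consider "x = l" | "l < x" "z < m" | "m < x" | "l < x" "x \<le> m" "m \<le> z" using xyz by linarith
  then show ?case
  proof cases
    case 1
    then show ?thesis using S3_tree_complete_at_root[OF s3 ls] xyz new by simp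
  next
    case 2
    define s' where "s' = s div 2 - 1"
    have "contains_copy n (insert {x, y, z} (S3_tree (l + 1) s')) 5 S3"
    proof (rule less.IH)
      show "s' < s" "l + 1 + s' \<le> n" "z < l + 1 + s'"
        unfolding s'_def using ls s3 2 unfolding m_def by linarith+
      show "{x, y, z} \<notin> S3_tree (l + 1) s'" "{x, y, z} \<notin> S3_exceptions (l + 1) s'"
        using new S3_tree_left[OF s3] S3_exceptions_left[OF s3] unfolding s'_def by blast+
    qed (use xyz 2 in auto)
    then show ?thesis
      by (rule contains_copy_mono) (use S3_tree_left[OF s3] s'_def in auto)
  next
    case 3
    define s' where "s' = s - s div 2 - 1"
    have "contains_copy n (insert {x, y, z} (S3_tree (l + s div 2 + 1) s')) 5 S3"
    proof (rule less.IH)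
      show "s' < s" "l + s div 2 + 1 + s' \<le> n" "l + s div 2 + 1 \<le> x" "z < l + s div 2 + 1 + s'"
        unfolding s'_def using ls s3 xyz 3 unfolding m_def by linarith+
      show "{x, y, z} \<notin> S3_tree (l + s div 2 + 1) s'" "{x, y, z} \<notin> S3_exceptions (l + s div 2 + 1) s'"
        using new S3_tree_right[OF s3] S3_exceptions_right[OF s3] unfolding s'_def by blast+
    qed (use xyz in auto)
    then show ?thesis
      by (rule contains_copy_mono) (use S3_tree_right[OF s3] s'_def in auto)
  next
    case 4
    then consider "x = m \<or> z = m" | "x < m" "m < z" by linarith
    then show ?thesis
      using S3_tree_complete_end_at_middle[OF s3 ls 4(1) xyz(2-4) _ new]
        S3_tree_complete_through_middle[OF s3 ls 4(1) xyz(2-4) _ _ new]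
      unfolding m_def by cases blast+
  qed
qed

lemma S3_upper:
  assumes "n < 2 ^ k"
  shows "sat_cyc n 5 S3 \<le> 5 * n * k"
proof -
  have tree: "S3_tree 0 n \<subseteq> triples n"
  proof
    fix e assume "e \<in> S3_tree 0 n"
    then show "e \<in> triples n" using S3_tree_triples[of e 0 n] unfolding triples_def by auto
  qed
  have free: "\<not> contains_copy n (S3_tree 0 n) 5 S3"
    using contains_copy_S3_crossing S3_tree_no_crossing by metis
  have "\<forall>e\<in>triples n - (S3_tree 0 n \<union> S3_exceptions 0 n).
      contains_copy n (insert e (S3_tree 0 n)) 5 S3"
    using S3_tree_complete[of 0 n n] by (auto elim!: triplesE)
  then have "sat_cyc n 5 S3 \<le> card (S3_tree 0 n) + card (S3_exceptions 0 n \<inter> triples n)"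
    by (rule sat_cyc_le_extension[OF tree free])
  then show ?thesis
    using card_S3_tree_le[OF assms, of 0] card_S3_exceptions_le[OF assms, of 0]
      card_Int_triples_le[OF finite_S3_exceptions, of 0 n n]
    by linarith
qed

section \<open>Lower bounds\<close>

lemma card_pairs_covered_le:
  assumes H: "H \<subseteq> triples n" and W: "finite W"
    and cover: "\<And>x y. x \<in> W \<Longrightarrow> y \<in> W \<Longrightarrow> x \<noteq> y \<Longrightarrow> \<exists>e\<in>H. x \<in> e \<and> y \<in> e"
  shows "card W choose 2 \<le> 3 * card H"
proof -
  define pairs where "pairs e = {p. p \<subseteq> e \<and> card p = 2}" for e :: "nat set"
  have finH: "finite H" using H finite_subset_triples by blast
  have pairs_edge: "finite (pairs e) \<and> card (pairs e) = 3" if "e \<in> H" for e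
  proof -
    have "finite e" "card e = 3" using that H unfolding triples_def by (auto intro: finite_subset)
    then show ?thesis using n_subsets[of e 2] unfolding pairs_def by (simp add: choose_two)
  qed
  have covered: "pairs W \<subseteq> (\<Union>e\<in>H. pairs e)"
  proof
    fix p assume p: "p \<in> pairs W"
    then have "card p = 2" unfolding pairs_def by simp
    then obtain x y where xy: "p = {x, y}" "x \<noteq> y" by (meson card_2_iff)
    then obtain e where "e \<in> H" "x \<in> e" "y \<in> e" using p cover unfolding pairs_def by blast
    then have "p \<in> pairs e" using p xy unfolding pairs_def by simp
    then show "p \<in> (\<Union>e\<in>H. pairs e)" using \<open>e \<in> H\<close> by blast
  qed
  have "finite (\<Union>e\<in>H. pairs e)" using finH pairs_edge by blast
  then have "card (pairs W) \<le> card (\<Union>e\<in>H. pairs e)" using covered by (rule card_mono)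
  also have "\<dots> \<le> (\<Sum>e\<in>H. card (pairs e))" by (rule card_UN_le[OF finH])
  also have "\<dots> = 3 * card H" using pairs_edge by simp
  finally have "card (pairs W) \<le> 3 * card H" .
  moreover have "card (pairs W) = card W choose 2" unfolding pairs_def by (rule n_subsets[OF W])
  ultimately show ?thesis by simp
qed

lemma saturated_shared_vertex_lower:
  assumes F: "F = {ea, eb}" "v \<in> ea" "v \<in> eb" "ea \<noteq> eb" "ea \<subseteq> {..<k}" "eb \<subseteq> {..<k}"
    and sat: "saturated n k F H"
  shows "n \<le> 3 * card H + 2"
proof (rule ccontr)
  assume "\<not> n \<le> 3 * card H + 2"
  moreover have H: "H \<subseteq> triples n" using saturatedD(1)[OF sat] .
  moreover have "card ({..<n} - \<Union>H) = n - card (\<Union>H)"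
    using Union_triples_subset[OF H] by (simp add: card_Diff_subset finite_subset)
  ultimately have "3 \<le> card ({..<n} - \<Union>H)" using card_Union_triples_le[OF H] by linarith
  then obtain t where t: "t \<subseteq> {..<n} - \<Union>H" "card t = 3"
    by (meson obtain_subset_with_card_n)
  moreover have "t \<notin> H"
  proof
    assume "t \<in> H"
    then have "t = {}" using t(1) by blast
    then show False using t(2) by simp
  qed
  ultimately have "t \<in> triples n" "t \<notin> H" unfolding triples_def by auto
  then obtain phi where "(phi ` ea = t \<and> phi ` eb \<in> H) \<or> (phi ` eb = t \<and> phi ` ea \<in> H)"
    using contains_copy_insert_two_edges[OF F(1,4,5,6) saturatedD(3)[OF sat] saturatedD(2)[OF sat]]
    by metis
  then have "phi v \<in> t \<inter> \<Union>H" using F(2,3) by blast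
  then show False using t(1) by blast
qed

text \<open>If a triple with two empty gaps, such as \<open>{i, i + 1, i + 2}\<close>, is added, the new copy of \<open>M\<^sub>2\<close>
  cannot use it: each edge of \<open>M\<^sub>2\<close> has vertices of the other edge in two of its three gaps.\<close>

lemma M2_saturated_meets_consecutive:
  assumes sat: "saturated n 6 M2 H" and i: "i + 2 < n"
  shows "{i, i + 1, i + 2} \<inter> \<Union>H \<noteq> {}"
proof
  assume disjoint: "{i, i + 1, i + 2} \<inter> \<Union>H = {}"
  define t where "t = {i, i + 1, i + 2}"
  have "t \<in> triples n" unfolding t_def using sorted_triple_in_triples[of i "i + 1" "i + 2" n] i by simp
  moreover have "t \<notin> H" using disjoint unfolding t_def by blast
  ultimately obtain phi where emb: "cyc_embedding 6 n phi" and
    copy: "(phi ` {0,1,3} = t \<and> phi ` {2,4,5} \<in> H) \<or> (phi ` {2,4,5} = t \<and> phi ` {0,1,3} \<in> H)"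
    using contains_copy_insert_two_edges[OF M2_edges saturatedD(3)[OF sat] saturatedD(2)[OF sat]]
    by metis
  have cy: "cyc (phi a) (phi b) (phi c)" if "a < 6" "b < 6" "c < 6" "cyc a b c" for a b c
    using cyc_embedding_cyc[OF emb that] .
  have lt: "i < i + 1" "i + 1 < i + 2" by simp_all
  from copy show False
  proof
    assume "phi ` {0,1,3} = t \<and> phi ` {2,4,5} \<in> H"
    then have "{phi 0, phi 1, phi 3} = {i, i + 1, i + 2}" unfolding t_def by simp
    from cyc_triple_rotation[OF lt this cy[of 0 1 3]]
    show False using cy[of 1 2 3] cy[of 3 4 0] cyc_adjacent by (auto simp: cyc_def)
  next
    assume "phi ` {2,4,5} = t \<and> phi ` {0,1,3} \<in> H"
    then have "{phi 2, phi 4, phi 5} = {i, i + 1, i + 2}" unfolding t_def by simp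
    from cyc_triple_rotation[OF lt this cy[of 2 4 5]]
    show False using cy[of 2 3 4] cy[of 5 0 2] cyc_adjacent by (auto simp: cyc_def)
  qed
qed

lemma card_meets_consecutive_triples:
  assumes "finite V" and meets: "\<And>i. i + 2 < n \<Longrightarrow> {i, i + 1, i + 2} \<inter> V \<noteq> {}"
  shows "n div 3 \<le> card V"
proof -
  define g where "g q = (SOME v. v \<in> {3 * q, 3 * q + 1, 3 * q + 2} \<inter> V)" for q
  have g: "g q \<in> {3 * q, 3 * q + 1, 3 * q + 2} \<inter> V" if "q < n div 3" for q
  proof -
    have "{3 * q, 3 * q + 1, 3 * q + 2} \<inter> V \<noteq> {}" using meets[of "3 * q"] that by (simp add: add.assoc)
    then show ?thesis unfolding g_def by (meson ex_in_conv someI_ex)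
  qed
  have "inj_on g {..<n div 3}"
  proof (rule inj_onI)
    fix a b assume "a \<in> {..<n div 3}" "b \<in> {..<n div 3}" "g a = g b"
    then show "a = b" using g[of a] g[of b] by auto
  qed
  moreover have "g ` {..<n div 3} \<subseteq> V" using g by auto
  ultimately show ?thesis using card_inj_on_le[OF _ _ assms(1)] by fastforce
qed

lemma M2_lower:
  assumes "saturated n 6 M2 H"
  shows "n div 3 \<le> 3 * card H"
proof -
  have H: "H \<subseteq> triples n" using saturatedD(1)[OF assms] .
  then have "finite (\<Union>H)" by (rule finite_subset[OF Union_triples_subset]) simp
  then have "n div 3 \<le> card (\<Union>H)"
    by (rule card_meets_consecutive_triples) (rule M2_saturated_meets_consecutive[OF assms])
  then show ?thesis using card_Union_triples_le[OF H] by linarith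
qed

text \<open>Each edge of \<open>M\<^sub>3\<close> has a vertex of the other edge in each of its three gaps, so no copy
  can use a triple \<open>{x, x + 1, y}\<close>.\<close>

lemma M3_saturated_adjacent_mem:
  assumes sat: "saturated n 6 M3 H" and xy: "x + 1 < y" "y < n"
  shows "{x, x + 1, y} \<in> H"
proof (rule ccontr)
  assume new: "{x, x + 1, y} \<notin> H"
  have "{x, x + 1, y} \<in> triples n" using sorted_triple_in_triples[of x "x + 1" y n] xy by simp
  then obtain phi where emb: "cyc_embedding 6 n phi" and copy:
    "(phi ` {0,2,4} = {x, x + 1, y} \<and> phi ` {1,3,5} \<in> H) \<or> (phi ` {1,3,5} = {x, x + 1, y} \<and> phi ` {0,2,4} \<in> H)"
    using contains_copy_insert_two_edges[OF M3_edges saturatedD(3)[OF sat] saturatedD(2)[OF sat]] new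
    by metis
  have cy: "cyc (phi a) (phi b) (phi c)" if "a < 6" "b < 6" "c < 6" "cyc a b c" for a b c
    using cyc_embedding_cyc[OF emb that] .
  have lt: "x < x + 1" "x + 1 < y" using xy by simp_all
  from copy show False
  proof
    assume "phi ` {0,2,4} = {x, x + 1, y} \<and> phi ` {1,3,5} \<in> H"
    then have "{phi 0, phi 2, phi 4} = {x, x + 1, y}" by simp
    from cyc_triple_rotation[OF lt this cy[of 0 2 4]]
    show False using cy[of 0 1 2] cy[of 2 3 4] cy[of 4 5 0] cyc_adjacent by (auto simp: cyc_def)
  next
    assume "phi ` {1,3,5} = {x, x + 1, y} \<and> phi ` {0,2,4} \<in> H"
    then have "{phi 1, phi 3, phi 5} = {x, x + 1, y}" by simp
    from cyc_triple_rotation[OF lt this cy[of 1 3 5]]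
    show False using cy[of 1 2 3] cy[of 3 4 5] cy[of 5 0 1] cyc_adjacent by (auto simp: cyc_def)
  qed
qed

lemma M3_lower:
  assumes sat: "saturated n 6 M3 H"
  shows "n div 2 * (n - n div 2 - 1) \<le> card H"
proof -
  define A where "A = {..<n div 2} \<times> {n div 2 + 1..<n}"
  define h where "h = (\<lambda>(x::nat, y::nat). {x, x + 1, y})"
  have "inj_on h A"
  proof (rule inj_onI)
    fix a b assume "a \<in> A" "b \<in> A" "h a = h b"
    moreover obtain x y x' y' where "a = (x, y)" "b = (x', y')" by fastforce
    ultimately have lt: "x + 1 < y" "x' + 1 < y'" and eq: "{x, x + 1, y} = {x', x' + 1, y'}"
      unfolding A_def h_def by auto
    have "Min {x, x + 1, y} = x" "Min {x', x' + 1, y'} = x'"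
      "Max {x, x + 1, y} = y" "Max {x', x' + 1, y'} = y'"
      using lt by (simp_all add: min_def max_def)
    then show "a = b" using eq \<open>a = (x, y)\<close> \<open>b = (x', y')\<close> by metis
  qed
  moreover have "h ` A \<subseteq> H" using M3_saturated_adjacent_mem[OF sat] unfolding h_def A_def by auto
  moreover have "finite H" using saturatedD(1)[OF sat] finite_subset_triples by blast
  ultimately have "card A \<le> card H" using card_inj_on_le by blast
  then show ?thesis unfolding A_def by (simp add: card_cartesian_product)
qed

text \<open>Let \<open>a\<close> be any vertex and \<open>W\<close> the vertices not sharing an edge with \<open>a\<close>. For \<open>x, y \<in> W\<close> the
  triple \<open>{a, x, y}\<close> is missing, and the copy it creates maps the two shared vertices of the
  pattern into the new triple and into an old edge avoiding \<open>a\<close>; hence into \<open>{x, y}\<close>.\<close>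

lemma saturated_two_common_link:
  assumes F: "F = {ea, eb}" "ea \<noteq> eb" "ea \<subseteq> {..<k}" "eb \<subseteq> {..<k}"
    "u \<in> ea" "u \<in> eb" "w \<in> ea" "w \<in> eb" "u \<noteq> w"
    and sat: "saturated n k F H" and a: "a < n"
  shows "(n - (3 * card {e\<in>H. a \<in> e} + 1)) choose 2 \<le> 3 * card H"
proof -
  have H: "H \<subseteq> triples n" using saturatedD(1)[OF sat] .
  define Ha where "Ha = {e\<in>H. a \<in> e}"
  define W where "W = {..<n} - insert a (\<Union>Ha)"
  have Ha: "Ha \<subseteq> triples n" using H unfolding Ha_def by auto
  have "finite (\<Union>Ha)" by (rule finite_subset[OF Union_triples_subset[OF Ha]]) simp
  then have "card (insert a (\<Union>Ha)) \<le> 3 * card Ha + 1"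
    using card_Union_triples_le[OF Ha] card_insert_le_m1 by (simp add: card_insert_if)
  then have "n - (3 * card Ha + 1) \<le> card W"
    using diff_card_le_card_Diff[of "insert a (\<Union>Ha)" "{..<n}"] \<open>finite (\<Union>Ha)\<close>
    unfolding W_def by simp
  moreover have "card W choose 2 \<le> 3 * card H"
  proof (rule card_pairs_covered_le[OF H])
    show "finite W" unfolding W_def by simp
  next
    fix x y assume xy: "x \<in> W" "y \<in> W" "x \<noteq> y"
    then have "x \<noteq> a" "y \<noteq> a" "x < n" "y < n" unfolding W_def by auto
    then have t: "{a, x, y} \<in> triples n" using xy(3) a unfolding triples_def by auto
    have "{a, x, y} \<notin> H" using xy unfolding W_def Ha_def by blast
    then obtain phi where emb: "cyc_embedding k n phi"
      and copy: "(phi ` ea = {a, x, y} \<and> phi ` eb \<in> H) \<or> (phi ` eb = {a, x, y} \<and> phi ` ea \<in> H)"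
      using contains_copy_insert_two_edges[OF F(1-4) saturatedD(3)[OF sat t] saturatedD(2)[OF sat]]
      by metis
    then obtain f where f: "f \<in> H" "phi u \<in> f" "phi w \<in> f" "phi u \<in> {a, x, y}" "phi w \<in> {a, x, y}"
      using F(5-8) by blast
    have "phi u \<noteq> phi w" using cyc_embedding_neq[OF emb] F by auto
    moreover have "a \<notin> f"
    proof
      assume "a \<in> f"
      then have "f \<subseteq> insert a (\<Union>Ha)" using f(1) unfolding Ha_def by blast
      then have "phi u \<notin> W" "phi w \<notin> W" using f(2,3) unfolding W_def by auto
      then show False using f(4,5) xy(1,2) \<open>phi u \<noteq> phi w\<close> by auto
    qed
    ultimately have "{x, y} \<subseteq> f" using f by auto
    then show "\<exists>e\<in>H. x \<in> e \<and> y \<in> e" using f(1) by blast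
  qed
  ultimately show ?thesis unfolding Ha_def using binomial_right_mono le_trans by blast
qed

lemma sum_degrees:
  assumes H: "H \<subseteq> triples n"
  shows "(\<Sum>a<n. card {e\<in>H. a \<in> e}) = 3 * card H"
proof -
  have finH: "finite H" using H finite_subset_triples by blast
  have "(\<Sum>a<n. card {e\<in>H. a \<in> e}) = (\<Sum>a<n. \<Sum>e\<in>H. if a \<in> e then 1 else 0)"
    using finH by (simp add: sum.If_cases Int_def conj_commute)
  also have "\<dots> = (\<Sum>e\<in>H. \<Sum>a<n. if a \<in> e then 1 else 0)" by (rule sum.swap)
  also have "\<dots> = (\<Sum>e\<in>H. 3)"
  proof (rule sum.cong)
    fix e assume "e \<in> H"
    then have e: "e \<subseteq> {..<n}" "card e = 3" using H unfolding triples_def by auto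
    then have "{..<n} \<inter> e = e" by auto
    then show "(\<Sum>a<n. if a \<in> e then 1 else (0::nat)) = 3" using e by (simp add: sum.If_cases)
  qed simp
  finally show ?thesis by simp
qed

lemma exists_low_degree:
  assumes H: "H \<subseteq> triples n" and n: "0 < n"
  obtains a where "a < n" "n * card {e\<in>H. a \<in> e} \<le> 3 * card H"
proof (rule ccontr)
  assume "\<not> thesis"
  then have "\<forall>a<n. 3 * card H < n * card {e\<in>H. a \<in> e}" using that by (meson not_le)
  then have "(\<Sum>a<n. 3 * card H) < (\<Sum>a<n. n * card {e\<in>H. a \<in> e})"
    using n by (intro sum_strict_mono) auto
  also have "\<dots> = n * (3 * card H)" using sum_degrees[OF H] by (simp add: sum_distrib_left[symmetric])
  finally show False by simp
qed

lemma square_le_of_degree_bounds: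
  fixes n m d :: nat
  assumes n: "8 \<le> n" and degree: "n * d \<le> 3 * m" and link: "(n - (3 * d + 1)) choose 2 \<le> 3 * m"
  shows "n * n \<le> 200 * m"
proof (rule ccontr)
  assume "\<not> ?thesis"
  then have big: "200 * m < n * n" by simp
  have "n * (200 * d) \<le> 600 * m" using degree by (simp add: mult.commute mult.left_commute)
  also have "\<dots> < n * (3 * n)" using big by simp
  finally have "200 * d < 3 * n" by (simp only: mult_less_cancel1)
  define w where "w = n - (3 * d + 1)"
  have w: "n \<le> 2 * w" "n \<le> 4 * (w - 1)" unfolding w_def using \<open>200 * d < 3 * n\<close> n by linarith+
  have "n * n \<le> (2 * w) * (4 * (w - 1))" using mult_le_mono[OF w] .
  then have "n * n \<le> 8 * (w * (w - 1))" by (simp add: algebra_simps)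
  moreover have "w * (w - 1) = 2 * (w choose 2)"
    unfolding choose_two by (cases w) simp_all
  ultimately show False using link big unfolding w_def by linarith
qed

lemma saturated_two_common_lower:
  assumes F: "F = {ea, eb}" "ea \<noteq> eb" "ea \<subseteq> {..<k}" "eb \<subseteq> {..<k}"
    "u \<in> ea" "u \<in> eb" "w \<in> ea" "w \<in> eb" "u \<noteq> w"
    and sat: "saturated n k F H" and n: "8 \<le> n"
  shows "n * n \<le> 200 * card H"
proof -
  obtain a where "a < n" "n * card {e\<in>H. a \<in> e} \<le> 3 * card H"
    using exists_low_degree[OF saturatedD(1)[OF sat]] n by auto
  then show ?thesis
    using square_le_of_degree_bounds[OF n] saturated_two_common_link[OF F sat] by blast
qed

definition rotate_vertex :: "nat \<Rightarrow> nat \<Rightarrow> nat \<Rightarrow> nat" where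
  "rotate_vertex n r x = (x + r) mod n"

definition rotate_edges :: "nat \<Rightarrow> nat \<Rightarrow> nat set set \<Rightarrow> nat set set" where
  "rotate_edges n r H = (\<lambda>e. rotate_vertex n r ` e) ` H"

lemma rotate_vertex_eq:
  "x < n \<Longrightarrow> r < n \<Longrightarrow> rotate_vertex n r x = (if x + r < n then x + r else x + r - n)"
  unfolding rotate_vertex_def by (simp add: mod_less_double)

lemma rotate_vertex_inj: "x < n \<Longrightarrow> y < n \<Longrightarrow> r < n \<Longrightarrow> rotate_vertex n r x = rotate_vertex n r y \<Longrightarrow> x = y"
  using rotate_vertex_eq[of x n r] rotate_vertex_eq[of y n r] by (auto split: if_splits)

lemma rotate_vertex_cyc:
  assumes "x < n" "y < n" "z < n" "cyc x y z"
  shows "cyc (rotate_vertex n r x) (rotate_vertex n r y) (rotate_vertex n r z)"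
proof -
  have sorted: "cyc (rotate_vertex n r p) (rotate_vertex n r q) (rotate_vertex n r w)"
    if "p < q" "q < w" "w < n" for p q w
    unfolding rotate_vertex_def by (rule cyc_mod_window) (use that in auto)
  from assms(4) consider "x < y" "y < z" | "y < z" "z < x" | "z < x" "x < y" unfolding cyc_def by auto
  then show ?thesis using sorted assms(1-3) cyc_rotate by cases metis+
qed

lemma rotate_vertex_inverse:
  assumes "x < n" "(r + s) mod n = 0"
  shows "rotate_vertex n s (rotate_vertex n r x) = x"
proof -
  have "rotate_vertex n s (rotate_vertex n r x) = (x + (r + s) mod n) mod n"
    unfolding rotate_vertex_def by (simp add: mod_add_left_eq mod_add_right_eq add.assoc)
  then show ?thesis using assms by simp
qed

lemma rotate_vertex_image_inverse:
  assumes "e \<subseteq> {..<n}" "(r + s) mod n = 0"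
  shows "rotate_vertex n s ` rotate_vertex n r ` e = e"
proof -
  have "rotate_vertex n s ` rotate_vertex n r ` e = (\<lambda>x. rotate_vertex n s (rotate_vertex n r x)) ` e"
    by (simp add: image_image)
  also have "\<dots> = (\<lambda>x. x) ` e" using rotate_vertex_inverse assms by (intro image_cong) auto
  finally show ?thesis by simp
qed

lemma contains_copy_rotate:
  assumes copy: "contains_copy n H k F" and r: "r < n"
  shows "contains_copy n (rotate_edges n r H) k F"
proof -
  obtain phi where emb: "cyc_embedding k n phi" and im: "\<forall>e\<in>F. phi ` e \<in> H"
    using copy unfolding contains_copy_def by blast
  have less: "\<And>i. i < k \<Longrightarrow> phi i < n" using cyc_embedding_less[OF emb] .
  have "cyc_embedding k n (rotate_vertex n r \<circ> phi)"
    unfolding cyc_embedding_def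
  proof (intro conjI allI impI)
    show "inj_on (rotate_vertex n r \<circ> phi) {..<k}"
    proof (rule inj_onI)
      fix i j assume i: "i \<in> {..<k}" and j: "j \<in> {..<k}"
        and "(rotate_vertex n r \<circ> phi) i = (rotate_vertex n r \<circ> phi) j"
      then have "phi i = phi j" using rotate_vertex_inj[OF less less r] by auto
      then show "i = j" using cyc_embedding_neq[OF emb] i j by blast
    qed
    show "(rotate_vertex n r \<circ> phi) ` {..<k} \<subseteq> {..<n}" using r unfolding rotate_vertex_def by auto
  next
    fix a b c assume "a < k" "b < k" "c < k" "cyc a b c"
    then show "cyc ((rotate_vertex n r \<circ> phi) a) ((rotate_vertex n r \<circ> phi) b) ((rotate_vertex n r \<circ> phi) c)"
      using cyc_embedding_cyc[OF emb] rotate_vertex_cyc[OF less less less] by simp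
  qed
  moreover have "(rotate_vertex n r \<circ> phi) ` e \<in> rotate_edges n r H" if "e \<in> F" for e
  proof -
    have "rotate_vertex n r ` (phi ` e) \<in> rotate_edges n r H"
      using im that unfolding rotate_edges_def by (intro imageI) blast
    then show ?thesis by (simp add: image_comp)
  qed
  ultimately show ?thesis unfolding contains_copy_def by blast
qed

lemma rotate_vertex_triple:
  assumes "e \<in> triples n" "r < n"
  shows "rotate_vertex n r ` e \<in> triples n"
proof -
  have e: "e \<subseteq> {..<n}" "card e = 3" using assms unfolding triples_def by auto
  then have "inj_on (rotate_vertex n r) e"
    using rotate_vertex_inj[OF _ _ assms(2)] unfolding inj_on_def by blast
  then have "card (rotate_vertex n r ` e) = 3" using e by (simp add: card_image)
  moreover have "rotate_vertex n r ` e \<subseteq> {..<n}" using assms(2) unfolding rotate_vertex_def by auto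
  ultimately show ?thesis unfolding triples_def by simp
qed

lemma rotate_edges_inverse:
  assumes "H \<subseteq> triples n" "(r + s) mod n = 0"
  shows "rotate_edges n s (rotate_edges n r H) = H"
proof -
  have "rotate_edges n s (rotate_edges n r H) = (\<lambda>e. rotate_vertex n s ` rotate_vertex n r ` e) ` H"
    unfolding rotate_edges_def by (simp add: image_image)
  also have "\<dots> = (\<lambda>e. e) ` H"
  proof (rule image_cong)
    fix e assume "e \<in> H"
    then have "e \<subseteq> {..<n}" using assms(1) unfolding triples_def by auto
    then show "rotate_vertex n s ` rotate_vertex n r ` e = e"
      by (rule rotate_vertex_image_inverse[OF _ assms(2)])
  qed simp
  finally show ?thesis by simp
qed

lemma saturated_rotate:
  assumes sat: "saturated n k F H" and r: "r < n"
  shows "saturated n k F (rotate_edges n r H)"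
  unfolding saturated_def
proof (intro conjI ballI)
  define s where "s = (n - r) mod n"
  have s: "s < n" unfolding s_def using r by simp
  have inverse: "(r + s) mod n = 0" "(s + r) mod n = 0" unfolding s_def using r
    by (metis add.commute add_diff_inverse_nat mod_add_right_eq mod_self not_less_iff_gr_or_eq)+
  have H: "H \<subseteq> triples n" using saturatedD(1)[OF sat] .
  show "rotate_edges n r H \<subseteq> triples n"
    using rotate_vertex_triple[OF _ r] H unfolding rotate_edges_def by auto
  show "\<not> contains_copy n (rotate_edges n r H) k F"
  proof
    assume "contains_copy n (rotate_edges n r H) k F"
    then have "contains_copy n (rotate_edges n s (rotate_edges n r H)) k F"
      by (rule contains_copy_rotate[OF _ s])
    then show False using rotate_edges_inverse[OF H inverse(1)] saturatedD(2)[OF sat] by simp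
  qed
  fix e assume e: "e \<in> triples n - rotate_edges n r H"
  define e' where "e' = rotate_vertex n s ` e"
  have "e \<subseteq> {..<n}" using e unfolding triples_def by auto
  then have ee: "rotate_vertex n r ` e' = e"
    unfolding e'_def by (rule rotate_vertex_image_inverse[OF _ inverse(2)])
  have "e' \<in> triples n" unfolding e'_def using rotate_vertex_triple[OF _ s] e by blast
  moreover have "e' \<notin> H" using e ee unfolding rotate_edges_def by blast
  ultimately have "contains_copy n (rotate_edges n r (insert e' H)) k F"
    using contains_copy_rotate[OF saturatedD(3)[OF sat] r] by blast
  then show "contains_copy n (insert e (rotate_edges n r H)) k F"
    using ee unfolding rotate_edges_def by simp
qed

lemma arc_of_cyc_triple:
  assumes "x < y" "y < z" "z < n" "{p, q, r} = {x, y, z}" "cyc p q r"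
  shows "{w. w < n \<and> cyc r w p} \<in> {{x<..<y}, {y<..<z}, {z<..<n} \<union> {..<x}}"
  using cyc_triple_rotation[OF assms(1,2,4,5)]
proof (elim disjE conjE)
  assume "p = x" "q = y" "r = z"
  then have "{w. w < n \<and> cyc r w p} = {z<..<n} \<union> {..<x}" using assms(1-3) unfolding cyc_def by auto
  then show ?thesis by simp
next
  assume "p = y" "q = z" "r = x"
  then have "{w. w < n \<and> cyc r w p} = {x<..<y}" using assms(1-3) unfolding cyc_def by auto
  then show ?thesis by simp
next
  assume "p = z" "q = x" "r = y"
  then have "{w. w < n \<and> cyc r w p} = {y<..<z}" using assms(1-3) unfolding cyc_def by auto
  then show ?thesis by simp
qed

lemma M1_saturated_arc:
  assumes sat: "saturated n 6 M1 H" and xyz: "x < y" "y < z" "z < n" and new: "{x, y, z} \<notin> H"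
  shows "\<exists>f\<in>H. f \<subseteq> {x<..<y} \<or> f \<subseteq> {y<..<z} \<or> f \<subseteq> {z<..<n} \<union> {..<x}"
proof -
  have "{x, y, z} \<in> triples n" using sorted_triple_in_triples[OF xyz] .
  then obtain phi where emb: "cyc_embedding 6 n phi" and copy:
    "(phi ` {0,1,2} = {x, y, z} \<and> phi ` {3,4,5} \<in> H) \<or> (phi ` {3,4,5} = {x, y, z} \<and> phi ` {0,1,2} \<in> H)"
    using contains_copy_insert_two_edges[OF M1_edges saturatedD(3)[OF sat] saturatedD(2)[OF sat]] new
    by metis
  have cy: "cyc (phi a) (phi b) (phi c)" if "a < 6" "b < 6" "c < 6" "cyc a b c" for a b c
    using cyc_embedding_cyc[OF emb that] .
  have lt: "phi a < n" if "a < 6" for a using cyc_embedding_less[OF emb that] .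
  let ?arcs = "{{x<..<y}, {y<..<z}, {z<..<n} \<union> {..<x}}"
  from copy show ?thesis
  proof
    assume h: "phi ` {0,1,2} = {x, y, z} \<and> phi ` {3,4,5} \<in> H"
    have "cyc (phi 2) (phi i) (phi 0)" if "i \<in> {3, 4, 5}" for i
      using cy[of 2 i 0] that unfolding cyc_def by auto
    then have "{phi 3, phi 4, phi 5} \<subseteq> {w. w < n \<and> cyc (phi 2) w (phi 0)}" using lt by auto
    moreover have "{w. w < n \<and> cyc (phi 2) w (phi 0)} \<in> ?arcs"
      using arc_of_cyc_triple[OF xyz, of "phi 0" "phi 1" "phi 2"] h cy[of 0 1 2] by (simp add: cyc_def)
    moreover have "{phi 3, phi 4, phi 5} \<in> H" using h by simp
    ultimately show ?thesis by blast
  next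
    assume h: "phi ` {3,4,5} = {x, y, z} \<and> phi ` {0,1,2} \<in> H"
    have "cyc (phi 5) (phi i) (phi 3)" if "i \<in> {0, 1, 2}" for i
      using cy[of 5 i 3] that unfolding cyc_def by auto
    then have "{phi 0, phi 1, phi 2} \<subseteq> {w. w < n \<and> cyc (phi 5) w (phi 3)}" using lt by auto
    moreover have "{w. w < n \<and> cyc (phi 5) w (phi 3)} \<in> ?arcs"
      using arc_of_cyc_triple[OF xyz, of "phi 3" "phi 4" "phi 5"] h cy[of 3 4 5] by (simp add: cyc_def)
    moreover have "{phi 0, phi 1, phi 2} \<in> H" using h by simp
    ultimately show ?thesis by blast
  qed
qed

lemma contains_M1_separated:
  assumes "f \<in> H" "g \<in> H" "f \<in> triples n" "g \<in> triples n" "\<forall>u\<in>g. \<forall>v\<in>f. u < v"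
  shows "contains_copy n H 6 M1"
proof -
  obtain a b c where g: "a < b" "b < c" "c < n" "g = {a, b, c}" using triplesE[OF assms(4)] by blast
  obtain x y z where f: "x < y" "y < z" "z < n" "f = {x, y, z}" using triplesE[OF assms(3)] by blast
  have "c < x" using assms(5) f g by auto
  then show ?thesis
    by (intro contains_copy_sorted_listI[where xs="[a, b, c, x, y, z]"])
      (use assms(1,2) f g in \<open>auto simp: M1_def\<close>)
qed

lemma exists_crossover:
  fixes L R :: "nat \<Rightarrow> bool"
  assumes "\<forall>j. p \<le> j \<and> j \<le> q \<longrightarrow> L j \<or> R j" "\<not> L p" "\<not> R q" "p \<le> q"
  shows "\<exists>j. p \<le> j \<and> j < q \<and> R j \<and> L (Suc j)"
  using assms
proof (induction q)
  case 0 then show ?case by auto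
next
  case (Suc q)
  show ?case
  proof (cases "p = Suc q")
    case True then show ?thesis using Suc.prems by auto
  next
    case False
    then have "p \<le> q" using Suc.prems by simp
    show ?thesis
    proof (cases "R q")
      case True
      have "L (Suc q) \<or> R (Suc q)" using Suc.prems(1) \<open>p \<le> q\<close> by simp
      then have "L (Suc q)" using Suc.prems(3) by simp
      then show ?thesis using True \<open>p \<le> q\<close> by auto
    next
      case False
      then show ?thesis using Suc.IH[OF _ Suc.prems(2) False \<open>p \<le> q\<close>] Suc.prems(1) by fastforce
    qed
  qed
qed

text \<open>Sweeping \<open>j\<close> through \<open>[p, q)\<close>, the side holding an edge must switch from right to left
  somewhere, producing two separated edges.\<close>

lemma M1_free_no_interval_split:
  assumes H: "H \<subseteq> triples n" and free: "\<not> contains_copy n H 6 M1" and "p < q"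
    and split: "\<And>j. p \<le> j \<Longrightarrow> j < q \<Longrightarrow> \<exists>f\<in>H. f \<subseteq> {p..<j} \<or> f \<subseteq> {j<..<q}"
  shows False
proof -
  define L where "L j = (\<exists>f\<in>H. f \<subseteq> {p..<j})" for j
  define R where "R j = (\<exists>f\<in>H. f \<subseteq> {j<..<q})" for j
  have "\<not> L p" "\<not> R (q - 1)" unfolding L_def R_def using H triple_not_empty by fastforce+
  moreover have "\<forall>j. p \<le> j \<and> j \<le> q - 1 \<longrightarrow> L j \<or> R j"
    using split \<open>p < q\<close> unfolding L_def R_def by (metis Suc_pred' le_imp_less_Suc less_nat_zero_code neq0_conv)
  ultimately have "\<exists>j. p \<le> j \<and> j < q - 1 \<and> R j \<and> L (Suc j)"
    using \<open>p < q\<close> by (intro exists_crossover) auto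
  then obtain j where "R j" "L (Suc j)" by blast
  then obtain f g where "f \<in> H" "f \<subseteq> {j<..<q}" "g \<in> H" "g \<subseteq> {p..<Suc j}"
    unfolding L_def R_def by blast
  then have "\<forall>u\<in>g. \<forall>v\<in>f. u < v" by fastforce
  then show False using contains_M1_separated \<open>f \<in> H\<close> \<open>g \<in> H\<close> H free by blast
qed

lemma M1_saturated_covers_pair_last:
  assumes sat: "saturated n 6 M1 H" and n: "4 \<le> n" and a: "a < n - 1"
  shows "\<exists>e\<in>H. a \<in> e \<and> n - 1 \<in> e"
proof (rule ccontr)
  assume uncovered: "\<not> ?thesis"
  define N where "N = n - 1"
  have N: "N < n" "a < N" "{N<..<n} = {}" unfolding N_def using n a by auto
  have H: "H \<subseteq> triples n" using saturatedD(1)[OF sat] .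
  have free: "\<not> contains_copy n H 6 M1" using saturatedD(2)[OF sat] .
  have new: "{p, q, N} \<notin> H" if "a = p \<or> a = q" for p q using uncovered that unfolding N_def by auto
  define below where "below = (\<exists>f\<in>H. f \<subseteq> {..<a})"
  define inside where "inside = (\<exists>f\<in>H. f \<subseteq> {a<..<N})"
  have "\<not> (below \<and> inside)"
  proof
    assume "below \<and> inside"
    then obtain f g where "g \<in> H" "g \<subseteq> {..<a}" "f \<in> H" "f \<subseteq> {a<..<N}"
      unfolding below_def inside_def by blast
    then have "\<forall>u\<in>g. \<forall>v\<in>f. u < v" by fastforce
    then show False using contains_M1_separated \<open>f \<in> H\<close> \<open>g \<in> H\<close> H free by blast
  qed
  moreover have "a + 1 < N" if inside
  proof (rule ccontr)
    assume "\<not> a + 1 < N"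
    then have "{a<..<N} = {}" by auto
    then show False using \<open>inside\<close> H triple_not_empty unfolding inside_def by blast
  qed
  moreover have "0 < a" if below
  proof (rule ccontr)
    assume "\<not> 0 < a"
    then have "{..<a} = {}" by auto
    then show False using \<open>below\<close> H triple_not_empty unfolding below_def by blast
  qed
  moreover have "a + 1 < N \<or> 0 < a" using N n unfolding N_def by linarith
  ultimately consider "\<not> below" "a + 1 < N" | "\<not> inside" "0 < a" by blast
  then show False
  proof cases
    case 1
    show False
    proof (rule M1_free_no_interval_split[OF H free 1(2)])
      fix j assume "a + 1 \<le> j" "j < N"
      with M1_saturated_arc[OF sat _ _ N(1) new[of a j]] obtain f where
        "f \<in> H" "f \<subseteq> {a<..<j} \<or> f \<subseteq> {j<..<N} \<or> f \<subseteq> {N<..<n} \<union> {..<a}" by auto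
      moreover have "{a<..<j} = {a + 1..<j}" by auto
      ultimately show "\<exists>f\<in>H. f \<subseteq> {a + 1..<j} \<or> f \<subseteq> {j<..<N}"
        using 1(1) N(3) unfolding below_def by auto
    qed
  next
    case 2
    show False
    proof (rule M1_free_no_interval_split[OF H free 2(2)])
      fix j assume "0 \<le> j" "j < a"
      with M1_saturated_arc[OF sat _ N(2,1) new[of j a]] obtain f where
        "f \<in> H" "f \<subseteq> {j<..<a} \<or> f \<subseteq> {a<..<N} \<or> f \<subseteq> {N<..<n} \<union> {..<j}" by auto
      moreover have "{..<j} = {0..<j}" by auto
      ultimately show "\<exists>f\<in>H. f \<subseteq> {0..<j} \<or> f \<subseteq> {j<..<a}"
        using 2(1) N(3) unfolding inside_def by auto
    qed
  qed
qed

lemma M1_saturated_covers_pair: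
  assumes sat: "saturated n 6 M1 H" and n: "4 \<le> n" and ab: "a < b" "b < n"
  shows "\<exists>e\<in>H. a \<in> e \<and> b \<in> e"
proof -
  define r where "r = n - 1 - b"
  have r: "r < n" unfolding r_def using n by simp
  have rb: "rotate_vertex n r b = n - 1" and ra: "rotate_vertex n r a < n - 1"
    unfolding rotate_vertex_def r_def using ab n by simp_all
  obtain e' where "e' \<in> rotate_edges n r H" "rotate_vertex n r a \<in> e'" "n - 1 \<in> e'"
    using M1_saturated_covers_pair_last[OF saturated_rotate[OF sat r] n ra] by blast
  then obtain e where e: "e \<in> H" "rotate_vertex n r a \<in> rotate_vertex n r ` e"
    "rotate_vertex n r b \<in> rotate_vertex n r ` e"
    unfolding rotate_edges_def rb by blast
  have "e \<subseteq> {..<n}" using e(1) saturatedD(1)[OF sat] unfolding triples_def by auto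
  moreover obtain a' b' where "a' \<in> e" "rotate_vertex n r a' = rotate_vertex n r a"
    "b' \<in> e" "rotate_vertex n r b' = rotate_vertex n r b"
    using e(2,3) by (metis imageE)
  ultimately have "a \<in> e" "b \<in> e" using rotate_vertex_inj[OF _ _ r] ab by (metis lessThan_iff order.strict_trans subsetD)+
  then show ?thesis using e(1) by blast
qed

lemma M1_lower:
  assumes sat: "saturated n 6 M1 H" and n: "4 \<le> n"
  shows "n choose 2 \<le> 3 * card H"
proof -
  have "card {..<n} choose 2 \<le> 3 * card H"
  proof (rule card_pairs_covered_le[OF saturatedD(1)[OF sat]])
    fix x y assume "x \<in> {..<n}" "y \<in> {..<n}" "x \<noteq> y"
    then show "\<exists>e\<in>H. x \<in> e \<and> y \<in> e"
      using M1_saturated_covers_pair[OF sat n, of x y] M1_saturated_covers_pair[OF sat n, of y x]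
      by (cases "x < y") auto
  qed simp
  then show ?thesis by simp
qed

section \<open>Asymptotics\<close>

lemma bigo_of_nat_le:
  fixes f g :: "nat \<Rightarrow> nat"
  assumes "\<forall>\<^sub>F n in at_top. f n \<le> c * g n"
  shows "(\<lambda>n. real (f n)) \<in> O(\<lambda>n. real (g n))"
proof (rule bigoI[where c = "real c"])
  show "\<forall>\<^sub>F n in at_top. norm (real (f n)) \<le> real c * norm (real (g n))"
    using assms by eventually_elim (metis norm_of_nat of_nat_le_iff of_nat_mult)
qed

lemma bigomega_of_nat_le:
  fixes f g :: "nat \<Rightarrow> nat"
  assumes "\<forall>\<^sub>F n in at_top. g n \<le> c * f n" and "0 < c"
  shows "(\<lambda>n. real (f n)) \<in> \<Omega>(\<lambda>n. real (g n))"
proof (rule landau_omega.bigI[where c = "1 / real c"])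
  show "0 < 1 / real c" using assms(2) by simp
  show "\<forall>\<^sub>F n in at_top. norm (real (f n)) \<ge> 1 / real c * norm (real (g n))"
    using assms(1)
  proof eventually_elim
    case (elim n)
    then have "real (g n) \<le> real c * real (f n)" by (metis of_nat_le_iff of_nat_mult)
    then show ?case using assms(2) by (simp add: field_simps)
  qed
qed

lemma bigtheta_of_nat_le:
  fixes f g :: "nat \<Rightarrow> nat"
  assumes "\<forall>\<^sub>F n in at_top. f n \<le> a * g n" "\<forall>\<^sub>F n in at_top. g n \<le> b * f n" "0 < b"
  shows "(\<lambda>n. real (f n)) \<in> \<Theta>(\<lambda>n. real (g n))"
  using bigo_of_nat_le[OF assms(1)] bigomega_of_nat_le[OF assms(2,3)] by (rule bigthetaI)

lemma sat_cyc_shared_vertex_lower: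
  assumes F: "F = {ea, eb}" "v \<in> ea" "v \<in> eb" "ea \<noteq> eb" "ea \<subseteq> {..<k}" "eb \<subseteq> {..<k}"
    and n: "6 \<le> n"
  shows "n \<le> 4 * sat_cyc n k F"
proof -
  obtain H where "saturated n k F H" "sat_cyc n k F = card H"
    using sat_cyc_attained[of F] F(1) by blast
  then show ?thesis using saturated_shared_vertex_lower[OF F] n by fastforce
qed

lemma sat_cyc_two_common_lower:
  assumes F: "F = {ea, eb}" "ea \<noteq> eb" "ea \<subseteq> {..<k}" "eb \<subseteq> {..<k}"
    "u \<in> ea" "u \<in> eb" "w \<in> ea" "w \<in> eb" "u \<noteq> w"
    and n: "8 \<le> n"
  shows "n * n \<le> 200 * sat_cyc n k F"
proof -
  obtain H where "saturated n k F H" "sat_cyc n k F = card H"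
    using sat_cyc_attained[of F] F(1) by blast
  then show ?thesis using saturated_two_common_lower[OF F _ n] by simp
qed

lemma sat_cyc_M2_linear: "(\<lambda>n. real (sat_cyc n 6 M2)) \<in> \<Theta>(\<lambda>n. real n)"
proof (rule bigtheta_of_nat_le[where g = "\<lambda>n. n" and a = 5 and b = 11])
  show "\<forall>\<^sub>F n in at_top. sat_cyc n 6 M2 \<le> 5 * n"
    using eventually_ge_at_top[of 6] by eventually_elim (use M2_upper in fastforce)
  show "\<forall>\<^sub>F n in at_top. n \<le> 11 * sat_cyc n 6 M2"
    using eventually_ge_at_top[of 6]
  proof eventually_elim
    case (elim n)
    obtain H where "saturated n 6 M2 H" "sat_cyc n 6 M2 = card H"
      using sat_cyc_attained[of M2] by (auto simp: M2_def)
    moreover have "n \<le> 3 * (n div 3) + 2" "2 \<le> n div 3" using elim by linarith+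
    ultimately show ?case using M2_lower[of n H] by linarith
  qed
qed simp

lemma sat_cyc_S1_linear: "(\<lambda>n. real (sat_cyc n 5 S1)) \<in> \<Theta>(\<lambda>n. real n)"
proof (rule bigtheta_of_nat_le[where g = "\<lambda>n. n" and a = 3 and b = 4])
  show "\<forall>\<^sub>F n in at_top. sat_cyc n 5 S1 \<le> 3 * n"
    using eventually_ge_at_top[of 6] by eventually_elim (use S1_upper in fastforce)
  show "\<forall>\<^sub>F n in at_top. n \<le> 4 * sat_cyc n 5 S1"
    using eventually_ge_at_top[of 6] by eventually_elim (rule sat_cyc_shared_vertex_lower[where v = 0, OF S1_edges(1) _ _ S1_edges(2-4)], simp_all)
qed simp

lemma sat_cyc_S2_linear: "(\<lambda>n. real (sat_cyc n 5 S2)) \<in> \<Theta>(\<lambda>n. real n)"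
proof (rule bigtheta_of_nat_le[where g = "\<lambda>n. n" and a = 3 and b = 4])
  show "\<forall>\<^sub>F n in at_top. sat_cyc n 5 S2 \<le> 3 * n"
    using eventually_ge_at_top[of 6] by eventually_elim (use S2_upper in fastforce)
  show "\<forall>\<^sub>F n in at_top. n \<le> 4 * sat_cyc n 5 S2"
    using eventually_ge_at_top[of 6] by eventually_elim (rule sat_cyc_shared_vertex_lower[where v = 0, OF S2_edges(1) _ _ S2_edges(2-4)], simp_all)
qed simp

lemma real_square_eq: "(\<lambda>n. real n ^ 2) = (\<lambda>n. real (n * n))"
  by (simp add: power2_eq_square)

lemma sat_cyc_M1_quadratic: "(\<lambda>n. real (sat_cyc n 6 M1)) \<in> \<Theta>(\<lambda>n. real n ^ 2)"
  unfolding real_square_eq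
proof (rule bigtheta_of_nat_le[where a = 2 and b = 12])
  show "\<forall>\<^sub>F n in at_top. sat_cyc n 6 M1 \<le> 2 * (n * n)"
    using eventually_ge_at_top[of 6]
  proof eventually_elim
    case (elim n)
    then have "3 * n \<le> n * n" by simp
    then show ?case using M1_upper[OF elim] by linarith
  qed
  show "\<forall>\<^sub>F n in at_top. n * n \<le> 12 * sat_cyc n 6 M1"
    using eventually_ge_at_top[of 4]
  proof eventually_elim
    case (elim n)
    obtain H where "saturated n 6 M1 H" "sat_cyc n 6 M1 = card H"
      using sat_cyc_attained[of M1] by (auto simp: M1_def)
    then have "n choose 2 \<le> 3 * sat_cyc n 6 M1" using M1_lower elim by simp
    moreover have "n * (n - 1) = 2 * (n choose 2)" unfolding choose_two by (cases n) simp_all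
    moreover have "n * n \<le> 2 * (n * (n - 1))" using elim by (cases n) simp_all
    ultimately show ?case by linarith
  qed
qed simp

lemma sat_cyc_M3_quadratic: "(\<lambda>n. real (sat_cyc n 6 M3)) \<in> \<Theta>(\<lambda>n. real n ^ 2)"
  unfolding real_square_eq
proof (rule bigtheta_of_nat_le[where a = 2 and b = 16])
  show "\<forall>\<^sub>F n in at_top. sat_cyc n 6 M3 \<le> 2 * (n * n)"
    using eventually_ge_at_top[of 6] by eventually_elim (use M3_upper in fastforce)
  show "\<forall>\<^sub>F n in at_top. n * n \<le> 16 * sat_cyc n 6 M3"
    using eventually_ge_at_top[of 8]
  proof eventually_elim
    case (elim n)
    obtain H where "saturated n 6 M3 H" "sat_cyc n 6 M3 = card H"
      using sat_cyc_attained[of M3] by (auto simp: M3_def)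
    then have "n div 2 * (n - n div 2 - 1) \<le> sat_cyc n 6 M3" using M3_lower by simp
    moreover have "n \<le> 4 * (n div 2)" "n \<le> 4 * (n - n div 2 - 1)" using elim by linarith+
    then have "n * n \<le> 16 * (n div 2 * (n - n div 2 - 1))" using mult_le_mono by fastforce
    ultimately show ?case by linarith
  qed
qed simp

lemma sat_cyc_D1_quadratic: "(\<lambda>n. real (sat_cyc n 4 D1)) \<in> \<Theta>(\<lambda>n. real n ^ 2)"
  unfolding real_square_eq
proof (rule bigtheta_of_nat_le[where a = 1 and b = 200])
  show "\<forall>\<^sub>F n in at_top. sat_cyc n 4 D1 \<le> 1 * (n * n)" using D1_upper by simp
  show "\<forall>\<^sub>F n in at_top. n * n \<le> 200 * sat_cyc n 4 D1"
    using eventually_ge_at_top[of 8]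
    by eventually_elim (rule sat_cyc_two_common_lower[where u = 0 and w = 2, OF D1_edges], simp_all)
qed simp

lemma sat_cyc_D2_quadratic: "(\<lambda>n. real (sat_cyc n 4 D2)) \<in> \<Theta>(\<lambda>n. real n ^ 2)"
  unfolding real_square_eq
proof (rule bigtheta_of_nat_le[where a = 1 and b = 200])
  show "\<forall>\<^sub>F n in at_top. sat_cyc n 4 D2 \<le> 1 * (n * n)" using D2_upper by simp
  show "\<forall>\<^sub>F n in at_top. n * n \<le> 200 * sat_cyc n 4 D2"
    using eventually_ge_at_top[of 8]
    by eventually_elim (rule sat_cyc_two_common_lower[where u = 0 and w = 1, OF D2_edges], simp_all)
qed simp

lemma sat_cyc_S3_linear_lower: "(\<lambda>n. real (sat_cyc n 5 S3)) \<in> \<Omega>(\<lambda>n. real n)"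
  using eventually_ge_at_top[of 6]
  by (intro bigomega_of_nat_le[where g = "\<lambda>n. n" and c = 4], eventually_elim)
    (rule sat_cyc_shared_vertex_lower[where v = 0, OF S3_edges(1) _ _ S3_edges(2-4)], simp_all)

lemma sat_cyc_S3_upper_log: "(\<lambda>n. real (sat_cyc n 5 S3)) \<in> O(\<lambda>n. real n * log 2 (real n))"
proof (rule bigoI[where c = 10])
  show "\<forall>\<^sub>F n in at_top. norm (real (sat_cyc n 5 S3)) \<le> 10 * norm (real n * log 2 (real n))"
    using eventually_ge_at_top[of 4]
  proof eventually_elim
    case (elim n)
    define k where "k = ceillog2 n + 1"
    have "n \<le> 2 ^ ceillog2 n" "0 < (2::nat) ^ ceillog2 n" using le_two_power_ceillog2 by simp_all
    then have "n < 2 * 2 ^ ceillog2 n" by linarith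
    then have "n < 2 ^ k" unfolding k_def by simp
    then have "real (sat_cyc n 5 S3) \<le> 5 * real n * real k"
      using S3_upper by (metis of_nat_le_iff of_nat_mult of_nat_numeral)
    moreover have "real k < log 2 (real n) + 2"
      using ceillog2_less_log[of n] elim unfolding k_def by simp
    moreover have "2 \<le> log 2 (real n)"
    proof -
      have "log 2 4 \<le> log 2 (real n)" using elim by simp
      moreover have "log 2 (4::real) = 2" using log2_of_power_eq[of 4 2] by simp
      ultimately show ?thesis by simp
    qed
    ultimately have "real k \<le> 2 * log 2 (real n)" by linarith
    then have "5 * real n * real k \<le> 5 * real n * (2 * log 2 (real n))" by (intro mult_left_mono) simp_all
    then have "real (sat_cyc n 5 S3) \<le> 10 * (real n * log 2 (real n))"
      using \<open>real (sat_cyc n 5 S3) \<le> 5 * real n * real k\<close> by linarith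
    then show ?case using \<open>2 \<le> log 2 (real n)\<close> by simp
  qed
qed

theorem theorem1p2:
  shows "(\<lambda>n. real (sat_cyc n 6 M2)) \<in> \<Theta>(\<lambda>n. real n) \<and>
    (\<lambda>n. real (sat_cyc n 5 S1)) \<in> \<Theta>(\<lambda>n. real n) \<and>
    (\<lambda>n. real (sat_cyc n 5 S2)) \<in> \<Theta>(\<lambda>n. real n) \<and>
    (\<lambda>n. real (sat_cyc n 6 M1)) \<in> \<Theta>(\<lambda>n. real n ^ 2) \<and>
    (\<lambda>n. real (sat_cyc n 6 M3)) \<in> \<Theta>(\<lambda>n. real n ^ 2) \<and>
    (\<lambda>n. real (sat_cyc n 4 D1)) \<in> \<Theta>(\<lambda>n. real n ^ 2) \<and>
    (\<lambda>n. real (sat_cyc n 4 D2)) \<in> \<Theta>(\<lambda>n. real n ^ 2) \<and>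
    (\<lambda>n. real (sat_cyc n 5 S3)) \<in> \<Omega>(\<lambda>n. real n) \<and>
    (\<lambda>n. real (sat_cyc n 5 S3)) \<in> O(\<lambda>n. real n * log 2 (real n))"
  using sat_cyc_M2_linear sat_cyc_S1_linear sat_cyc_S2_linear
    sat_cyc_M1_quadratic sat_cyc_M3_quadratic sat_cyc_D1_quadratic sat_cyc_D2_quadratic
    sat_cyc_S3_linear_lower sat_cyc_S3_upper_log
  by blast

end
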